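(* Let $\Omega\subset\mathbb{R}^2$ be a domain and let $\psi$ be a non-constant real-analytic function on $\Omega$ satisfying $\{\psi,\Delta\psi\}=0$. Let $\Gamma$ be a curve contained in the critical set $\mathcal{C}(\psi)$. If $d_\psi(x_* )=2$ for some $x_*\in\Gamma$, then $d_\psi(x)=2$ for every $x$ in the connected component of $\{\nabla\psi=0\}$ containing $\Gamma$.
   Context: The Poisson bracket is $\{f,g\}=\partial_1 f\,\partial_2 g-\partial_2 f\,\partial_1 g$. For a non-constant real-analytic $f$ and a point $x$, $d_f(x)$ denotes the smallest integer $k\ge1$ such that $D^kf(x)\neq0$, and $\mathcal{C}(f)=\{x: d_f(x)>1\}$. *)

theory Defs
  imports "HOL-Analysis.Analysis"
begin

definition real_analytic_on :: "(real \<times> real \<Rightarrow> real) \<Rightarrow> (real \<times> real) set \<Rightarrow> bool" where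
  "real_analytic_on f \<Omega> \<longleftrightarrow>
     (\<forall>z\<in>\<Omega>. \<exists>r>0. \<exists>a :: nat \<Rightarrow> nat \<Rightarrow> real.
        \<forall>p\<in>ball z r.
          (\<lambda>(i,j). \<bar>a i j * (fst p - fst z) ^ i * (snd p - snd z) ^ j\<bar>) summable_on UNIV \<and>
          ((\<lambda>(i,j). a i j * (fst p - fst z) ^ i * (snd p - snd z) ^ j) has_sum f p) UNIV)"

definition partial1 :: "(real \<times> real \<Rightarrow> real) \<Rightarrow> real \<times> real \<Rightarrow> real" where
  "partial1 f = (\<lambda>p. deriv (\<lambda>t. f (t, snd p)) (fst p))"

definition partial2 :: "(real \<times> real \<Rightarrow> real) \<Rightarrow> real \<times> real \<Rightarrow> real" where
  "partial2 f = (\<lambda>p. deriv (\<lambda>t. f (fst p, t)) (snd p))"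

definition laplacian :: "(real \<times> real \<Rightarrow> real) \<Rightarrow> real \<times> real \<Rightarrow> real" where
  "laplacian f = (\<lambda>p. partial1 (partial1 f) p + partial2 (partial2 f) p)"

definition poisson_bracket ::
  "(real \<times> real \<Rightarrow> real) \<Rightarrow> (real \<times> real \<Rightarrow> real) \<Rightarrow> real \<times> real \<Rightarrow> real" where
  "poisson_bracket f g = (\<lambda>p. partial1 f p * partial2 g p - partial2 f p * partial1 g p)"

text \<open>\<open>D^k f(x) \<noteq> 0\<close>: the k-th derivative (symmetric k-linear form) is nonzero,
  i.e. some partial derivative of order k is nonzero.\<close>
definition Dk_nonzero :: "(real \<times> real \<Rightarrow> real) \<Rightarrow> nat \<Rightarrow> real \<times> real \<Rightarrow> bool" where
  "Dk_nonzero f k x \<longleftrightarrow> (\<exists>i j. i + j = k \<and> (partial1 ^^ i) ((partial2 ^^ j) f) x \<noteq> 0)"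

definition vanishing_order :: "(real \<times> real \<Rightarrow> real) \<Rightarrow> real \<times> real \<Rightarrow> nat" where
  "vanishing_order f x = (LEAST k. 1 \<le> k \<and> Dk_nonzero f k x)"

definition critical_set :: "(real \<times> real \<Rightarrow> real) \<Rightarrow> (real \<times> real) set \<Rightarrow> (real \<times> real) set" where
  "critical_set f \<Omega> = {x\<in>\<Omega>. vanishing_order f x > 1}"

end

theory Submission
  imports Defs
begin

text \<open>Let \<open>\<omega> = \<Delta>\<psi>\<close> and let \<open>Z\<close> be the zero set of \<open>\<nabla>\<psi>\<close>. Near a point of \<open>Z\<close> where \<open>\<omega> \<noteq> 0\<close>
  the Hessian, whose trace is \<open>\<omega>\<close>, has a nonzero diagonal entry, so \<open>Z\<close> is locally a Lipschitz
  graph; differentiating \<open>{\<psi>, \<omega>} = 0\<close> along \<open>Z\<close> shows that \<open>\<omega>\<close> has zero derivative along this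
  graph, hence (Sard) \<open>\<omega>(Z \<inter> {\<omega> \<noteq> 0})\<close> is a null set. On a connected component of \<open>Z\<close> the
  image of \<open>\<omega>\<close> is an interval, null away from \<open>0\<close>, so \<open>\<omega>\<close> is constant there. At \<open>x\<^sub>*\<close> the Hessian
  is nonzero and \<open>x\<^sub>*\<close> is not isolated in \<open>Z\<close> (it lies on the arc \<open>\<Gamma>\<close>); a nonzero trace-free
  symmetric Hessian would be invertible and make \<open>x\<^sub>*\<close> an isolated critical point. So \<open>\<omega>(x\<^sub>*) \<noteq> 0\<close>,
  and \<open>\<omega> \<noteq> 0\<close> on the whole component, where therefore the Hessian never vanishes.\<close>

section \<open>Double power series\<close>

definition has_power_series ::
  "(nat \<Rightarrow> nat \<Rightarrow> real) \<Rightarrow> real \<times> real \<Rightarrow> real \<Rightarrow> (real \<times> real \<Rightarrow> real) \<Rightarrow> bool" where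
  "has_power_series a z r f \<longleftrightarrow> r > 0 \<and> (\<forall>p\<in>ball z r.
     (\<lambda>(i,j). \<bar>a i j * (fst p - fst z) ^ i * (snd p - snd z) ^ j\<bar>) summable_on UNIV \<and>
     ((\<lambda>(i,j). a i j * (fst p - fst z) ^ i * (snd p - snd z) ^ j) has_sum f p) UNIV)"

lemma real_analytic_on_iff_has_power_series:
  "real_analytic_on f \<Omega> \<longleftrightarrow> (\<forall>z\<in>\<Omega>. \<exists>r a. has_power_series a z r f)"
  unfolding real_analytic_on_def has_power_series_def by blast

lemma has_power_seriesD:
  assumes "has_power_series a z r f" "p \<in> ball z r"
  shows "(\<lambda>(i,j). \<bar>a i j * (fst p - fst z) ^ i * (snd p - snd z) ^ j\<bar>) summable_on UNIV"
    and "((\<lambda>(i,j). a i j * (fst p - fst z) ^ i * (snd p - snd z) ^ j) has_sum f p) UNIV"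
  using assms unfolding has_power_series_def by auto

lemma has_power_series_radius_pos: "has_power_series a z r f \<Longrightarrow> r > 0"
  by (simp add: has_power_series_def)

lemma has_power_series_const_term:
  assumes "has_power_series a z r f" and "p \<in> ball z r" and "\<And>i j. 1 \<le> i + j \<Longrightarrow> a i j = 0"
  shows "f p = a 0 0"
proof -
  have "((\<lambda>(i,j). a i j * (fst p - fst z) ^ i * (snd p - snd z) ^ j) has_sum a 0 0) UNIV"
  proof (rule has_sum_finite_neutralI[where B = "{(0,0)}"])
    fix x assume "x \<in> UNIV - {(0::nat, 0::nat)}"
    then obtain i j where "x = (i,j)" "1 \<le> i + j" by (cases x) auto
    then show "(\<lambda>(i,j). a i j * (fst p - fst z) ^ i * (snd p - snd z) ^ j) x = 0"
      using assms(3) by simp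
  qed auto
  then show ?thesis using has_power_seriesD(2)[OF assms(1,2)] has_sum_unique by blast
qed

lemma has_power_series_center:
  assumes "has_power_series a z r f" shows "f z = a 0 0"
proof -
  have "z \<in> ball z r" using has_power_series_radius_pos[OF assms] by simp
  moreover have "((\<lambda>(i,j). a i j * (fst z - fst z) ^ i * (snd z - snd z) ^ j) has_sum a 0 0) UNIV"
    by (rule has_sum_finite_neutralI[where B = "{(0,0)}"]) (auto simp: zero_power)
  ultimately show ?thesis using has_power_seriesD(2)[OF assms] has_sum_unique by blast
qed

lemma has_sum_diff:
  fixes f g :: "'a \<Rightarrow> real"
  assumes "(f has_sum a) A" "(g has_sum b) A"
  shows "((\<lambda>x. f x - g x) has_sum (a - b)) A"
  using has_sum_add[OF assms(1) has_sum_cmult_right[OF assms(2), of "-1"]] by simp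

lemma summable_on_product_nonneg:
  fixes F G :: "nat \<Rightarrow> real"
  assumes "\<And>i. F i \<ge> 0" "\<And>j. G j \<ge> 0" "F summable_on UNIV" "G summable_on UNIV"
  shows "(\<lambda>(i,j). F i * G j) summable_on UNIV"
proof -
  have "(\<lambda>(i,j). F i * G j) summable_on Sigma UNIV (\<lambda>_. UNIV)"
  proof (rule summable_on_SigmaI[where g = "\<lambda>i. F i * infsum G UNIV"])
    show "((\<lambda>j. (\<lambda>(i,j). F i * G j) (i,j)) has_sum F i * infsum G UNIV) UNIV" for i
      using has_sum_cmult_right[OF has_sum_infsum[OF assms(4)]] by simp
    show "(\<lambda>i. F i * infsum G UNIV) summable_on UNIV"
      using summable_on_cmult_left assms(3) by blast
    show "(\<lambda>(i,j). F i * G j) (x,y) \<ge> 0" for x y using assms by simp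
  qed
  then show ?thesis by simp
qed

lemma summable_on_geometric_moments:
  fixes q :: real assumes "0 \<le> q" "q < 1"
  shows "(\<lambda>i. q ^ i) summable_on UNIV"
    and "(\<lambda>i. real i * q ^ i) summable_on UNIV"
    and "(\<lambda>i. real i ^ 2 * q ^ i) summable_on UNIV"
proof -
  have q: "\<bar>q\<bar> < 1" using assms by simp
  \<comment> \<open>the two weighted series are the first and second formal derivatives of the geometric series\<close>
  have d1: "summable (\<lambda>n. real (Suc n) * x ^ n)" if "\<bar>x\<bar> < 1" for x :: real
  proof -
    have "summable (\<lambda>n. diffs (\<lambda>_. 1::real) n * x ^ n)"
      by (rule termdiff_converges[where K = 1]) (use that in \<open>auto intro: summable_geometric\<close>)
    then show ?thesis by (simp add: diffs_def)
  qed
  have d2: "summable (\<lambda>n. real (Suc n) * real (Suc (Suc n)) * q ^ n)"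
  proof -
    have "summable (\<lambda>n. diffs (\<lambda>n. real (Suc n)) n * q ^ n)"
      by (rule termdiff_converges[where K = 1]) (use q d1 in auto)
    then show ?thesis by (simp add: diffs_def)
  qed
  show "(\<lambda>i. q ^ i) summable_on UNIV"
    using summable_on_UNIV_nonneg_real_iff assms summable_geometric[of q] q by auto
  have G1: "(\<lambda>i. real (Suc i) * q ^ i) summable_on UNIV"
    using summable_on_UNIV_nonneg_real_iff assms d1[OF q] by auto
  show "(\<lambda>i. real i * q ^ i) summable_on UNIV"
    by (rule summable_on_comparison_test[OF G1]) (use assms in \<open>auto intro!: mult_right_mono\<close>)
  have G2: "(\<lambda>i. real (Suc i) * real (Suc (Suc i)) * q ^ i) summable_on UNIV"
    using summable_on_UNIV_nonneg_real_iff assms d2 by auto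
  show "(\<lambda>i. real i ^ 2 * q ^ i) summable_on UNIV"
  proof (rule summable_on_comparison_test[OF G2])
    fix i
    have "real i ^ 2 \<le> real (Suc i) * real (Suc (Suc i))"
      by (simp add: power2_eq_square mult_mono)
    then show "real i ^ 2 * q ^ i \<le> real (Suc i) * real (Suc (Suc i)) * q ^ i"
      using assms by (intro mult_right_mono) auto
  qed (use assms in auto)
qed

lemma pair_in_ball:
  assumes "\<bar>x - fst z\<bar> \<le> s" "\<bar>y - snd z\<bar> \<le> t" "s\<^sup>2 + t\<^sup>2 < r\<^sup>2" "r > 0"
  shows "(x, y) \<in> ball z r"
proof -
  have "dist z (x, y) = sqrt ((fst z - x)\<^sup>2 + (snd z - y)\<^sup>2)"
    by (cases z) (simp add: dist_Pair_Pair dist_real_def)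
  also have "\<dots> \<le> sqrt (s\<^sup>2 + t\<^sup>2)"
  proof (rule real_sqrt_le_mono, rule add_mono)
    show "(fst z - x)\<^sup>2 \<le> s\<^sup>2"
      using assms(1) by (metis abs_minus_commute power2_abs power_mono abs_ge_zero)
    show "(snd z - y)\<^sup>2 \<le> t\<^sup>2"
      using assms(2) by (metis abs_minus_commute power2_abs power_mono abs_ge_zero)
  qed
  also have "\<dots> < r"
    using assms(3,4) by (metis abs_of_pos real_sqrt_abs real_sqrt_less_iff)
  finally show ?thesis by simp
qed

lemma ball_coordinate_bounds:
  assumes "p \<in> ball z r"
  shows "\<bar>fst p - fst z\<bar> < r" "\<bar>snd p - snd z\<bar> < r"
proof -
  have "p - z = (fst p - fst z, snd p - snd z)" by (cases p, cases z) simp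
  then have "dist z p = norm (fst p - fst z, snd p - snd z)"
    by (simp add: dist_norm norm_minus_commute)
  then have "\<bar>fst p - fst z\<bar> \<le> dist z p" "\<bar>snd p - snd z\<bar> \<le> dist z p"
    using norm_fst_le[of "fst p - fst z" "snd p - snd z"] norm_snd_le[of "snd p - snd z" "fst p - fst z"]
    by auto
  then show "\<bar>fst p - fst z\<bar> < r" "\<bar>snd p - snd z\<bar> < r" using assms by auto
qed

lemma has_power_series_coeff_bound:
  assumes "has_power_series a z r f"
  obtains M where "\<And>i j. \<bar>a i j\<bar> * (r/2) ^ i * (r/2) ^ j \<le> M"
proof -
  have r: "r > 0" using has_power_series_radius_pos[OF assms] .
  have "(fst z + r/2, snd z + r/2) \<in> ball z r"
    using r by (intro pair_in_ball[of _ z "r/2" _ "r/2"]) (auto simp: power2_eq_square)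
  then have sm: "(\<lambda>(i,j). \<bar>a i j * (r/2) ^ i * (r/2) ^ j\<bar>) summable_on UNIV"
    using has_power_seriesD(1)[OF assms] by fastforce
  let ?g = "\<lambda>(i,j). \<bar>a i j * (r/2) ^ i * (r/2) ^ j\<bar>"
  show ?thesis
  proof (rule that[of "infsum ?g UNIV"])
    fix i j
    have "(?g has_sum ?g (i,j)) {(i,j)}" using has_sum_finite[of "{(i,j)}" ?g] by simp
    then have "?g (i,j) \<le> infsum ?g UNIV"
      by (rule has_sum_mono'[OF _ has_sum_infsum[OF sm]]) auto
    then show "\<bar>a i j\<bar> * (r/2) ^ i * (r/2) ^ j \<le> infsum ?g UNIV"
      using r by (simp add: abs_mult)
  qed
qed

lemma power_linear_remainder_bound:
  fixes u s \<rho> :: real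
  assumes "\<bar>u\<bar> \<le> \<rho>" "\<bar>u + s\<bar> \<le> \<rho>" "\<rho> > 0"
  shows "\<rho>\<^sup>2 * \<bar>(u + s) ^ i - u ^ i - real i * s * u ^ (i - 1)\<bar> \<le> real i ^ 2 * s\<^sup>2 * \<rho> ^ i"
proof (induction i)
  case 0 show ?case by simp
next
  case (Suc i)
  let ?E = "(u + s) ^ i - u ^ i - real i * s * u ^ (i - 1)"
  have eq: "(u + s) ^ Suc i - u ^ Suc i - real (Suc i) * s * u ^ (Suc i - 1)
      = (u + s) * ?E + real i * s\<^sup>2 * u ^ (i - 1)"
    by (cases i) (simp_all add: algebra_simps power2_eq_square)
  have t1: "\<rho>\<^sup>2 * \<bar>(u + s) * ?E\<bar> \<le> \<rho> * (real i ^ 2 * s\<^sup>2 * \<rho> ^ i)"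
  proof -
    have "\<rho>\<^sup>2 * \<bar>(u + s) * ?E\<bar> = \<bar>u + s\<bar> * (\<rho>\<^sup>2 * \<bar>?E\<bar>)" by (simp add: abs_mult)
    also have "\<dots> \<le> \<rho> * (real i ^ 2 * s\<^sup>2 * \<rho> ^ i)"
      by (rule mult_mono) (use Suc.IH assms in auto)
    finally show ?thesis .
  qed
  have t2: "\<rho>\<^sup>2 * \<bar>real i * s\<^sup>2 * u ^ (i - 1)\<bar> \<le> real i * s\<^sup>2 * \<rho> ^ Suc i"
  proof (cases i)
    case (Suc k)
    have "\<bar>u\<bar> ^ k \<le> \<rho> ^ k" using assms by (intro power_mono) auto
    then have "\<rho>\<^sup>2 * (real i * s\<^sup>2 * \<bar>u\<bar> ^ k) \<le> \<rho>\<^sup>2 * (real i * s\<^sup>2 * \<rho> ^ k)"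
      by (intro mult_left_mono) auto
    moreover have "\<bar>real i * s\<^sup>2 * u ^ (i - 1)\<bar> = real i * s\<^sup>2 * \<bar>u\<bar> ^ k"
      using Suc by (simp add: abs_mult power_abs)
    moreover have "\<rho>\<^sup>2 * (real i * s\<^sup>2 * \<rho> ^ k) = real i * s\<^sup>2 * \<rho> ^ Suc i"
      using Suc by (simp add: power2_eq_square algebra_simps)
    ultimately show ?thesis by simp
  qed simp
  have "\<rho>\<^sup>2 * \<bar>(u + s) ^ Suc i - u ^ Suc i - real (Suc i) * s * u ^ (Suc i - 1)\<bar>
      \<le> \<rho>\<^sup>2 * \<bar>(u + s) * ?E\<bar> + \<rho>\<^sup>2 * \<bar>real i * s\<^sup>2 * u ^ (i - 1)\<bar>"
    unfolding eq distrib_left[symmetric] by (rule mult_left_mono[OF abs_triangle_ineq]) simp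
  also have "\<dots> \<le> \<rho> * (real i ^ 2 * s\<^sup>2 * \<rho> ^ i) + real i * s\<^sup>2 * \<rho> ^ Suc i"
    using t1 t2 by linarith
  also have "\<dots> = (real i ^ 2 + real i) * s\<^sup>2 * \<rho> ^ Suc i"
    by (simp add: algebra_simps)
  also have "\<dots> \<le> real (Suc i) ^ 2 * s\<^sup>2 * \<rho> ^ Suc i"
    using assms by (intro mult_right_mono) (auto simp: power2_eq_square algebra_simps)
  finally show ?case .
qed

lemma has_derivative_at_quadratic_remainder:
  fixes f :: "'a::real_normed_vector \<Rightarrow> 'b::real_normed_vector"
  assumes L: "bounded_linear L" and \<delta>: "\<delta> > 0"
    and rem: "\<And>h. norm h < \<delta> \<Longrightarrow> norm (f (x + h) - f x - L h) \<le> C * (norm h)\<^sup>2"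
  shows "(f has_derivative L) (at x)"
  unfolding has_derivative_at_alt
proof (intro conjI allI impI L)
  fix e :: real assume e: "e > 0"
  define d where "d = min \<delta> (e / (\<bar>C\<bar> + 1))"
  show "\<exists>d>0. \<forall>y. norm (y - x) < d \<longrightarrow> norm (f y - f x - L (y - x)) \<le> e * norm (y - x)"
  proof (intro exI[of _ d] conjI allI impI)
    show "d > 0" using \<delta> e by (simp add: d_def)
    fix y assume y: "norm (y - x) < d"
    have "(\<bar>C\<bar> + 1) * norm (y - x) \<le> e"
      using y by (simp add: d_def field_simps)
    then have "(\<bar>C\<bar> + 1) * norm (y - x) * norm (y - x) \<le> e * norm (y - x)"
      by (rule mult_right_mono) simp
    moreover have "C * (norm (y - x) * norm (y - x)) \<le> (\<bar>C\<bar> + 1) * (norm (y - x) * norm (y - x))"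
      by (rule mult_right_mono) auto
    ultimately have "C * (norm (y - x))\<^sup>2 \<le> e * norm (y - x)"
      by (simp add: power2_eq_square mult.assoc)
    then show "norm (f y - f x - L (y - x)) \<le> e * norm (y - x)"
      using rem[of "y - x"] y by (simp add: d_def)
  qed
qed

lemma has_sum_reindex_Suc_fst:
  fixes g :: "nat \<Rightarrow> nat \<Rightarrow> 'a::{comm_monoid_add,topological_space}"
  assumes "((\<lambda>(i,j). g i j) has_sum S) UNIV" and "\<And>j. g 0 j = 0"
  shows "((\<lambda>(i,j). g (Suc i) j) has_sum S) UNIV"
proof -
  let ?h = "\<lambda>(i::nat, j::nat). (Suc i, j)"
  have "((\<lambda>(i,j). g i j) has_sum S) (?h ` UNIV)"
  proof (rule has_sum_cong_neutral[THEN iffD1, OF _ _ _ assms(1)])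
    fix x assume x: "x \<in> UNIV - ?h ` UNIV"
    obtain i j where xij: "x = (i, j)" by (cases x)
    have "i = 0"
    proof (rule ccontr)
      assume "i \<noteq> 0"
      then have "x \<in> ?h ` UNIV" using xij by (cases i) (auto simp: image_iff)
      then show False using x by simp
    qed
    then show "(\<lambda>(i,j). g i j) x = 0" using xij assms(2) by simp
  qed auto
  then have "((\<lambda>(i,j). g i j) \<circ> ?h has_sum S) UNIV"
    by (subst has_sum_reindex[symmetric]) (auto simp: inj_on_def)
  moreover have "(\<lambda>(i,j). g i j) \<circ> ?h = (\<lambda>(i,j). g (Suc i) j)"
    by (auto simp: fun_eq_iff)
  ultimately show ?thesis by simp
qed

lemma has_power_series_majorant:
  assumes "has_power_series a z r f"
  obtains M where "M \<ge> 0"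
    and "\<And>i j x y. \<bar>x\<bar> \<le> r/3 \<Longrightarrow> \<bar>y\<bar> \<le> r/3 \<Longrightarrow>
           \<bar>a i j\<bar> * \<bar>x\<bar> ^ i * \<bar>y\<bar> ^ j \<le> M * (2/3) ^ i * (2/3) ^ j"
proof -
  obtain M where M: "\<And>i j. \<bar>a i j\<bar> * (r/2) ^ i * (r/2) ^ j \<le> M"
    using has_power_series_coeff_bound[OF assms] by blast
  have r: "r > 0" using has_power_series_radius_pos[OF assms] .
  show thesis
  proof (rule that)
    show "M \<ge> 0" using M[of 0 0] by simp
    fix i j and x y :: real assume "\<bar>x\<bar> \<le> r/3" "\<bar>y\<bar> \<le> r/3"
    then have "\<bar>a i j\<bar> * \<bar>x\<bar> ^ i * \<bar>y\<bar> ^ j \<le> \<bar>a i j\<bar> * (r/3) ^ i * (r/3) ^ j"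
      by (intro mult_mono power_mono) auto
    also have "\<dots> = (\<bar>a i j\<bar> * (r/2) ^ i * (r/2) ^ j) * ((2/3) ^ i * (2/3) ^ j)"
    proof -
      have pw: "(r/3) ^ k = (r/2) ^ k * (2/3) ^ k" for k :: nat
        by (simp add: power_mult_distrib[symmetric])
      show ?thesis unfolding pw by (simp add: mult_ac)
    qed
    also have "\<dots> \<le> M * ((2/3) ^ i * (2/3) ^ j)"
      using M by (intro mult_right_mono) auto
    finally show "\<bar>a i j\<bar> * \<bar>x\<bar> ^ i * \<bar>y\<bar> ^ j \<le> M * (2/3) ^ i * (2/3) ^ j" by simp
  qed
qed

lemma has_power_series_first_variable_expansion:
  assumes S: "has_power_series a z r f" and p: "p \<in> ball z (r/4)"
  defines d_def: "d \<equiv> \<lambda>(i,j). real i * a i j * (fst p - fst z) ^ (i - 1) * (snd p - snd z) ^ j"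
  obtains D K where "(\<lambda>x. \<bar>d x\<bar>) summable_on UNIV" and "(d has_sum D) UNIV"
    and "\<And>y. \<bar>y - fst p\<bar> < r/12 \<Longrightarrow> \<bar>f (y, snd p) - f p - (y - fst p) * D\<bar> \<le> K * (y - fst p)\<^sup>2"
proof -
  have r: "r > 0" using has_power_series_radius_pos[OF S] .
  obtain M where M0: "M \<ge> 0" and maj: "\<And>i j x y. \<bar>x\<bar> \<le> r/3 \<Longrightarrow> \<bar>y\<bar> \<le> r/3 \<Longrightarrow>
      \<bar>a i j\<bar> * \<bar>x\<bar> ^ i * \<bar>y\<bar> ^ j \<le> M * (2/3) ^ i * (2/3) ^ j"
    using has_power_series_majorant[OF S] by blast
  define \<rho> where "\<rho> = r/3"
  define q where "q = (2/3::real)"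
  have \<rho>: "\<rho> > 0" using r by (simp add: \<rho>_def)
  have q: "0 \<le> q" "q < 1" by (auto simp: q_def)
  have qs: "(\<lambda>j. q ^ j) summable_on UNIV" "(\<lambda>i. real i * q ^ i) summable_on UNIV"
    "(\<lambda>i. real i ^ 2 * q ^ i) summable_on UNIV"
    using summable_on_geometric_moments[OF q] by auto
  define Bd where "Bd = (\<lambda>(i::nat, j::nat). (M/\<rho> * (real i * q ^ i)) * q ^ j)"
  define B2 where "B2 = (\<lambda>(i::nat, j::nat). (M/\<rho>\<^sup>2 * (real i ^ 2 * q ^ i)) * q ^ j)"
  have Bds: "Bd summable_on UNIV" unfolding Bd_def
    by (rule summable_on_product_nonneg[OF _ _ summable_on_cmult_right[OF qs(2)] qs(1)])
      (use M0 \<rho> q in auto)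
  have B2s: "B2 summable_on UNIV" unfolding B2_def
    by (rule summable_on_product_nonneg[OF _ _ summable_on_cmult_right[OF qs(3)] qs(1)])
      (use M0 \<rho> q in auto)
  define u where "u = fst p - fst z"
  define v where "v = snd p - snd z"
  have d: "d = (\<lambda>(i,j). real i * a i j * u ^ (i - 1) * v ^ j)" by (simp add: d_def u_def v_def)
  have uv: "\<bar>u\<bar> < r/4" "\<bar>v\<bar> < r/4" using ball_coordinate_bounds[OF p] by (auto simp: u_def v_def)
  have u\<rho>: "\<bar>u\<bar> \<le> \<rho>" and v\<rho>: "\<bar>v\<bar> \<le> \<rho>" using uv r by (auto simp: \<rho>_def)
  have shift: "\<bar>a (Suc i) j\<bar> * \<bar>u\<bar> ^ i * \<bar>v\<bar> ^ j \<le> M/\<rho> * q ^ Suc i * q ^ j" for i j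
  proof -
    have "\<rho> * (\<bar>a (Suc i) j\<bar> * \<bar>u\<bar> ^ i * \<bar>v\<bar> ^ j) \<le> \<rho> * (\<bar>a (Suc i) j\<bar> * \<rho> ^ i * \<rho> ^ j)"
      using u\<rho> v\<rho> \<rho> by (intro mult_left_mono mult_mono power_mono) auto
    also have "\<dots> = \<bar>a (Suc i) j\<bar> * \<bar>\<rho>\<bar> ^ Suc i * \<bar>\<rho>\<bar> ^ j" using \<rho> by simp
    also have "\<dots> \<le> M * q ^ Suc i * q ^ j" unfolding q_def by (rule maj) (use \<rho> in \<open>auto simp: \<rho>_def\<close>)
    finally show ?thesis using \<rho> by (simp add: field_simps)
  qed
  have dB: "\<bar>d x\<bar> \<le> Bd x" for x
  proof -
    obtain i j where x: "x = (i, j)" by (cases x)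
    show ?thesis
    proof (cases i)
      case 0 then show ?thesis using M0 \<rho> q by (simp add: x d Bd_def)
    next
      case (Suc k)
      have "real i * (\<bar>a (Suc k) j\<bar> * \<bar>u\<bar> ^ k * \<bar>v\<bar> ^ j) \<le> real i * (M/\<rho> * q ^ Suc k * q ^ j)"
        using shift by (intro mult_left_mono) auto
      then show ?thesis
        using Suc by (simp add: x d Bd_def abs_mult power_abs mult_ac)
    qed
  qed
  have dabs: "(\<lambda>x. \<bar>d x\<bar>) summable_on UNIV"
    by (rule summable_on_comparison_test[OF Bds]) (use dB in auto)
  then have "(\<lambda>x. norm (d x)) summable_on UNIV" by simp
  then have "d summable_on UNIV" by (rule abs_summable_summable)
  then obtain D where dh: "(d has_sum D) UNIV" using has_sum_infsum by blast
  have "p \<in> ball z r" using p r by auto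
  then have h0: "((\<lambda>(i,j). a i j * u ^ i * v ^ j) has_sum f p) UNIV"
    unfolding u_def v_def by (rule has_power_seriesD(2)[OF S])
  have rem: "\<bar>f (y, snd p) - f p - (y - fst p) * D\<bar> \<le> infsum B2 UNIV * (y - fst p)\<^sup>2"
    if y: "\<bar>y - fst p\<bar> < r/12" for y
  proof -
    define s where "s = y - fst p"
    have us: "\<bar>u + s\<bar> \<le> \<rho>" using y uv abs_triangle_ineq[of u s] by (simp add: s_def \<rho>_def)
    have "(y, snd p) \<in> ball z r"
    proof (rule pair_in_ball[of _ z \<rho> _ "r/4"])
      show "\<bar>y - fst z\<bar> \<le> \<rho>" using us by (simp add: s_def u_def)
      show "\<bar>snd p - snd z\<bar> \<le> r/4" using uv by (simp add: v_def)
    qed (use r in \<open>auto simp: \<rho>_def power2_eq_square\<close>)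
    moreover have "y - fst z = u + s" by (simp add: s_def u_def)
    ultimately have h1: "((\<lambda>(i,j). a i j * (u + s) ^ i * v ^ j) has_sum f (y, snd p)) UNIV"
      using has_power_seriesD(2)[OF S] unfolding v_def by fastforce
    define e where "e = (\<lambda>(i,j). a i j * (u + s) ^ i * v ^ j - a i j * u ^ i * v ^ j - s * d (i,j))"
    have "((\<lambda>x. (\<lambda>(i,j). a i j * (u + s) ^ i * v ^ j) x - (\<lambda>(i,j). a i j * u ^ i * v ^ j) x - s * d x)
        has_sum (f (y, snd p) - f p - s * D)) UNIV"
      by (intro has_sum_diff h0 h1 has_sum_cmult_right dh)
    moreover have "e = (\<lambda>x. (\<lambda>(i,j). a i j * (u + s) ^ i * v ^ j) x - (\<lambda>(i,j). a i j * u ^ i * v ^ j) x - s * d x)"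
      unfolding e_def by (rule ext) (simp add: split_beta)
    ultimately have eh: "(e has_sum (f (y, snd p) - f p - s * D)) UNIV" by simp
    have eb: "norm (e x) \<le> s\<^sup>2 * B2 x" for x
    proof -
      obtain i j where x: "x = (i, j)" by (cases x)
      let ?E = "(u + s) ^ i - u ^ i - real i * s * u ^ (i - 1)"
      have "e x = a i j * v ^ j * ?E" by (simp add: x e_def d algebra_simps)
      then have "\<rho>\<^sup>2 * \<bar>e x\<bar> = \<bar>a i j\<bar> * \<bar>v\<bar> ^ j * (\<rho>\<^sup>2 * \<bar>?E\<bar>)"
        by (simp add: abs_mult power_abs mult_ac)
      also have "\<dots> \<le> \<bar>a i j\<bar> * \<bar>v\<bar> ^ j * (real i ^ 2 * s\<^sup>2 * \<rho> ^ i)"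
        by (intro mult_left_mono power_linear_remainder_bound) (use u\<rho> us \<rho> in auto)
      also have "\<dots> \<le> \<bar>a i j\<bar> * \<rho> ^ j * (real i ^ 2 * s\<^sup>2 * \<rho> ^ i)"
        using v\<rho> \<rho> by (intro mult_right_mono mult_left_mono power_mono) auto
      also have "\<dots> = (real i ^ 2 * s\<^sup>2) * (\<bar>a i j\<bar> * \<bar>\<rho>\<bar> ^ i * \<bar>\<rho>\<bar> ^ j)"
        using \<rho> by (simp add: mult_ac)
      also have "\<dots> \<le> (real i ^ 2 * s\<^sup>2) * (M * q ^ i * q ^ j)"
        unfolding q_def by (intro mult_left_mono maj) (use \<rho> in \<open>auto simp: \<rho>_def\<close>)
      also have "\<dots> = \<rho>\<^sup>2 * (s\<^sup>2 * B2 x)" using \<rho> by (simp add: x B2_def field_simps)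
      finally show ?thesis using \<rho> by simp
    qed
    have "norm (f (y, snd p) - f p - s * D) \<le> s\<^sup>2 * infsum B2 UNIV"
      by (rule norm_infsum_le[OF eh has_sum_cmult_right[OF has_sum_infsum[OF B2s]] eb])
    then show ?thesis by (simp add: s_def mult.commute)
  qed
  show thesis by (rule that[OF dabs dh rem])
qed

lemma has_power_series_partial1:
  assumes S: "has_power_series a z r f"
  shows "has_power_series (\<lambda>i j. real (Suc i) * a (Suc i) j) z (r/4) (partial1 f)"
  unfolding has_power_series_def
proof (intro conjI ballI)
  have r: "r > 0" using has_power_series_radius_pos[OF S] .
  then show "r/4 > 0" by simp
  fix p assume p: "p \<in> ball z (r/4)"
  define u where "u = fst p - fst z"
  define v where "v = snd p - snd z"
  define d where "d = (\<lambda>(i,j). real i * a i j * u ^ (i - 1) * v ^ j)"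
  obtain D K where dabs: "(\<lambda>x. \<bar>d x\<bar>) summable_on UNIV" and dh: "(d has_sum D) UNIV"
    and rem: "\<And>y. \<bar>y - fst p\<bar> < r/12 \<Longrightarrow> \<bar>f (y, snd p) - f p - (y - fst p) * D\<bar> \<le> K * (y - fst p)\<^sup>2"
    using has_power_series_first_variable_expansion[OF S p] unfolding d_def u_def v_def by blast
  have "((\<lambda>t. f (t, snd p)) has_real_derivative D) (at (fst p))"
    unfolding has_field_derivative_def
  proof (rule has_derivative_at_quadratic_remainder[where \<delta> = "r/12" and C = K])
    fix h :: real assume "norm h < r/12"
    then show "norm (f (fst p + h, snd p) - f (fst p, snd p) - D * h) \<le> K * (norm h)\<^sup>2"
      using rem[of "fst p + h"] by (simp add: mult.commute)
  qed (use r in \<open>auto intro: bounded_linear_mult_right\<close>)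
  then have "partial1 f p = D" unfolding partial1_def by (rule DERIV_imp_deriv)
  have d_eta: "(\<lambda>(i,j). d (i,j)) = d" by auto
  have d0: "d (0, j) = 0" for j by (simp add: d_def)
  have "((\<lambda>(i,j). \<bar>d (Suc i, j)\<bar>) has_sum infsum (\<lambda>x. \<bar>d x\<bar>) UNIV) UNIV"
    by (rule has_sum_reindex_Suc_fst[of "\<lambda>i j. \<bar>d (i,j)\<bar>"])
      (use has_sum_infsum[OF dabs] d0 d_eta in \<open>auto simp: split_beta'\<close>)
  then show "(\<lambda>(i,j). \<bar>real (Suc i) * a (Suc i) j * (fst p - fst z) ^ i * (snd p - snd z) ^ j\<bar>)
      summable_on UNIV"
    unfolding summable_on_def by (auto simp: d_def u_def v_def)
  have "((\<lambda>(i,j). d (Suc i, j)) has_sum D) UNIV"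
    by (rule has_sum_reindex_Suc_fst[of "\<lambda>i j. d (i,j)"]) (use dh d0 d_eta in auto)
  then show "((\<lambda>(i,j). real (Suc i) * a (Suc i) j * (fst p - fst z) ^ i * (snd p - snd z) ^ j)
      has_sum partial1 f p) UNIV"
    using \<open>partial1 f p = D\<close> by (simp add: d_def u_def v_def)
qed

lemma dist_swap: "dist (prod.swap p) (prod.swap q) = dist p (q :: real \<times> real)"
  by (cases p, cases q) (simp add: dist_Pair_Pair add.commute)

lemma swap_ball: "prod.swap ` ball (p :: real \<times> real) r = ball (prod.swap p) r"
proof (intro set_eqI iffI)
  fix x assume "x \<in> prod.swap ` ball p r"
  then obtain y where "dist p y < r" "x = prod.swap y" by auto
  then show "x \<in> ball (prod.swap p) r" using dist_swap[of p y] by simp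
next
  fix x assume "x \<in> ball (prod.swap p) r"
  then have "prod.swap x \<in> ball p r" using dist_swap[of "prod.swap p" x] by simp
  then show "x \<in> prod.swap ` ball p r" by (auto intro: image_eqI[of _ _ "prod.swap x"])
qed

lemma partial1_comp_swap: "partial1 (f \<circ> prod.swap) = partial2 f \<circ> prod.swap"
  by (auto simp: fun_eq_iff partial1_def partial2_def)

lemma partial2_comp_swap: "partial2 (f \<circ> prod.swap) = partial1 f \<circ> prod.swap"
  by (auto simp: fun_eq_iff partial1_def partial2_def)

lemma has_power_series_comp_swap:
  assumes S: "has_power_series a z r f"
  shows "has_power_series (\<lambda>i j. a j i) (prod.swap z) r (f \<circ> prod.swap)"
  unfolding has_power_series_def
proof (intro conjI ballI)
  show "r > 0" using has_power_series_radius_pos[OF S] .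
  fix p assume "p \<in> ball (prod.swap z) r"
  then have ps: "prod.swap p \<in> ball z r" using dist_swap[of z "prod.swap p"] by simp
  have bij: "bij_betw prod.swap (UNIV :: (nat \<times> nat) set) UNIV" by simp
  let ?g = "\<lambda>(i,j). a i j * (fst (prod.swap p) - fst z) ^ i * (snd (prod.swap p) - snd z) ^ j"
  have g_swap: "(\<lambda>x. ?g (prod.swap x))
      = (\<lambda>(i,j). a j i * (fst p - fst (prod.swap z)) ^ i * (snd p - snd (prod.swap z)) ^ j)"
    by (rule ext) (simp add: split_beta mult.assoc mult.commute mult.left_commute)
  have "(\<lambda>x. \<bar>?g x\<bar>) summable_on UNIV"
    using has_power_seriesD(1)[OF S ps] by (simp add: case_prod_unfold)
  then have "(\<lambda>x. \<bar>?g (prod.swap x)\<bar>) summable_on UNIV"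
    by (subst summable_on_reindex_bij_betw[OF bij, where f = "\<lambda>x. \<bar>?g x\<bar>"])
  then show "(\<lambda>(i,j). \<bar>a j i * (fst p - fst (prod.swap z)) ^ i * (snd p - snd (prod.swap z)) ^ j\<bar>)
      summable_on UNIV"
    by (rule summable_on_cong[THEN iffD1, rotated])
      (simp add: split_beta mult.assoc mult.commute mult.left_commute)
  have "((\<lambda>x. ?g (prod.swap x)) has_sum f (prod.swap p)) UNIV"
    by (subst has_sum_reindex_bij_betw[OF bij]) (rule has_power_seriesD(2)[OF S ps])
  then show "((\<lambda>(i,j). a j i * (fst p - fst (prod.swap z)) ^ i * (snd p - snd (prod.swap z)) ^ j)
      has_sum (f \<circ> prod.swap) p) UNIV"
    unfolding g_swap by simp
qed

lemma has_power_series_partial2: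
  assumes "has_power_series a z r f"
  shows "has_power_series (\<lambda>i j. real (Suc j) * a i (Suc j)) z (r/4) (partial2 f)"
proof -
  have "has_power_series (\<lambda>i j. real (Suc i) * a j (Suc i)) (prod.swap z) (r/4) (partial2 f \<circ> prod.swap)"
    using has_power_series_partial1[OF has_power_series_comp_swap[OF assms]]
    by (simp add: partial1_comp_swap)
  from has_power_series_comp_swap[OF this] show ?thesis by (simp add: comp_assoc)
qed

section \<open>Real-analytic functions\<close>

definition differential :: "(real \<times> real \<Rightarrow> real) \<Rightarrow> real \<times> real \<Rightarrow> real \<times> real \<Rightarrow> real" where
  "differential f q = (\<lambda>h. partial1 f q * fst h + partial2 f q * snd h)"

lemma has_power_series_partials_center:
  assumes "has_power_series a z r f"
  shows "partial1 f z = a 1 0" and "partial2 f z = a 0 1"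
  using has_power_series_center[OF has_power_series_partial1[OF assms]]
    has_power_series_center[OF has_power_series_partial2[OF assms]] by simp_all

lemma has_power_series_has_derivative:
  assumes S: "has_power_series a z r f"
  shows "(f has_derivative differential f z) (at z)"
proof -
  have r: "r > 0" using has_power_series_radius_pos[OF S] .
  obtain M where M: "\<And>i j. \<bar>a i j\<bar> * (r/2) ^ i * (r/2) ^ j \<le> M"
    using has_power_series_coeff_bound[OF S] by blast
  have M0: "M \<ge> 0" using M[of 0 0] by simp
  define R where "R = r/2"
  have R: "R > 0" using r by (simp add: R_def)
  define W where "W = (\<lambda>(i::nat, j::nat). (1/2::real) ^ i * (1/2) ^ j)"
  have Ws: "W summable_on UNIV" unfolding W_def
    by (rule summable_on_product_nonneg) (use summable_on_geometric_moments(1)[of "1/2"] in auto)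
  define K where "K = infsum W UNIV"
  have "differential f z = (\<lambda>h. a 1 0 * fst h + a 0 1 * snd h)"
    by (simp add: differential_def has_power_series_partials_center[OF S])
  moreover have "(f has_derivative (\<lambda>h. a 1 0 * fst h + a 0 1 * snd h)) (at z)"
  proof (rule has_derivative_at_quadratic_remainder[where \<delta> = "r/4" and C = "4 * M * K / R\<^sup>2"])
    show "bounded_linear (\<lambda>h. a 1 0 * fst h + a 0 1 * snd h)"
      by (intro bounded_linear_add bounded_linear_const_mult bounded_linear_fst bounded_linear_snd)
    show "r/4 > 0" using r by simp
    fix h :: "real \<times> real" assume hn: "norm h < r/4"
    define t where "t = norm h / R"
    have t: "0 \<le> t" "t \<le> 1/2" using hn R by (auto simp: t_def R_def field_simps)
    have h1: "\<bar>fst h\<bar> \<le> norm h" using norm_fst_le[of "fst h" "snd h"] by simp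
    have h2: "\<bar>snd h\<bar> \<le> norm h" using norm_snd_le[of "snd h" "fst h"] by simp
    have zh: "z + h \<in> ball z r" using hn r by (simp add: dist_norm)
    have gh: "((\<lambda>(i,j). a i j * fst h ^ i * snd h ^ j) has_sum f (z + h)) UNIV"
      using has_power_seriesD(2)[OF S zh] by simp
    let ?L = "\<lambda>(i,j). if i + j < 2 then a i j * fst h ^ i * snd h ^ j else 0"
    have Lh: "(?L has_sum (a 0 0 + a 1 0 * fst h + a 0 1 * snd h)) UNIV"
    proof (rule has_sum_finite_neutralI[where B = "{(0,0), (1,0), (0,1)}"])
      fix x assume x: "x \<in> UNIV - {(0::nat, 0::nat), (1,0), (0,1)}"
      obtain i j where xij: "x = (i, j)" by (cases x)
      have "\<not> i + j < 2" using x xij by (cases i; cases j) auto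
      then show "?L x = 0" using xij by simp
    qed auto
    let ?e = "\<lambda>x. (\<lambda>(i,j). a i j * fst h ^ i * snd h ^ j) x - ?L x"
    \<comment> \<open>a term of total degree \<open>i + j \<ge> 2\<close> is at most \<open>M t ^ (i + j) \<le> 4 M t\<^sup>2 W (i, j)\<close>, as \<open>t \<le> 1/2\<close>\<close>
    have eb: "norm (?e x) \<le> 4 * M * t\<^sup>2 * W x" for x
    proof -
      obtain i j where x: "x = (i, j)" by (cases x)
      show ?thesis
      proof (cases "i + j < 2")
        case True then show ?thesis using x M0 t by (simp add: W_def)
      next
        case False
        then obtain k where k: "i + j = k + 2" by (metis add.commute le_Suc_ex not_less)
        have "\<bar>a i j * fst h ^ i * snd h ^ j\<bar> \<le> \<bar>a i j\<bar> * norm h ^ i * norm h ^ j"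
          using h1 h2 by (simp add: abs_mult power_abs) (intro mult_mono power_mono, auto)
        also have "\<dots> = (\<bar>a i j\<bar> * R ^ i * R ^ j) * t ^ (i + j)"
        proof -
          have nh: "norm h = R * t" using R by (simp add: t_def)
          show ?thesis unfolding nh power_mult_distrib power_add by (simp only: mult_ac)
        qed
        also have "\<dots> \<le> M * t ^ (i + j)" using M[of i j] t by (intro mult_right_mono) (auto simp: R_def)
        also have "\<dots> \<le> M * (t\<^sup>2 * (1/2) ^ k)"
        proof -
          have "t ^ k \<le> (1/2) ^ k" by (rule power_mono) (use t in auto)
          then have "t\<^sup>2 * t ^ k \<le> t\<^sup>2 * (1/2) ^ k" by (rule mult_left_mono) simp
          moreover have "t ^ (i + j) = t\<^sup>2 * t ^ k" unfolding k power_add by (simp only: mult.commute)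
          ultimately show ?thesis using M0 by (simp add: mult_left_mono)
        qed
        also have "(1/2::real) ^ k = 4 * W x"
        proof -
          have "(1/2::real) ^ i * (1/2) ^ j = (1/2) ^ (k + 2)" by (simp only: power_add[symmetric] k)
          then show ?thesis by (simp add: W_def x)
        qed
        finally show ?thesis using False x by (simp add: mult_ac)
      qed
    qed
    have "norm (f (z + h) - (a 0 0 + a 1 0 * fst h + a 0 1 * snd h)) \<le> 4 * M * t\<^sup>2 * K"
      unfolding K_def by (rule norm_infsum_le[OF has_sum_diff[OF gh Lh] has_sum_cmult_right[OF has_sum_infsum[OF Ws]] eb])
    also have "4 * M * t\<^sup>2 * K = 4 * M * K / R\<^sup>2 * (norm h)\<^sup>2"
      using R by (simp add: t_def power_divide)
    finally show "norm (f (z + h) - f z - (a 1 0 * fst h + a 0 1 * snd h)) \<le> 4 * M * K / R\<^sup>2 * (norm h)\<^sup>2"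
      using has_power_series_center[OF S] by (simp add: algebra_simps)
  qed
  ultimately show ?thesis by simp
qed

lemma real_analytic_on_partial1: "real_analytic_on f \<Omega> \<Longrightarrow> real_analytic_on (partial1 f) \<Omega>"
  unfolding real_analytic_on_iff_has_power_series using has_power_series_partial1 by blast

lemma real_analytic_on_partial2: "real_analytic_on f \<Omega> \<Longrightarrow> real_analytic_on (partial2 f) \<Omega>"
  unfolding real_analytic_on_iff_has_power_series using has_power_series_partial2 by blast

lemma real_analytic_on_iterated_partials:
  assumes "real_analytic_on f \<Omega>"
  shows "real_analytic_on ((partial1 ^^ i) ((partial2 ^^ j) f)) \<Omega>"
proof -
  have "real_analytic_on ((partial2 ^^ j) f) \<Omega>"
    by (induction j) (use assms real_analytic_on_partial2 in auto)
  then show ?thesis by (induction i) (use real_analytic_on_partial1 in auto)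
qed

lemma real_analytic_on_add:
  assumes "real_analytic_on f \<Omega>" "real_analytic_on g \<Omega>"
  shows "real_analytic_on (\<lambda>p. f p + g p) \<Omega>"
  unfolding real_analytic_on_iff_has_power_series
proof
  fix z assume "z \<in> \<Omega>"
  then obtain r a s b where A: "has_power_series a z r f" and B: "has_power_series b z s g"
    using assms unfolding real_analytic_on_iff_has_power_series by meson
  have "has_power_series (\<lambda>i j. a i j + b i j) z (min r s) (\<lambda>p. f p + g p)"
    unfolding has_power_series_def
  proof (intro conjI ballI)
    show "min r s > 0" using A B by (simp add: has_power_series_def)
    fix p assume p: "p \<in> ball z (min r s)"
    then have pr: "p \<in> ball z r" and ps: "p \<in> ball z s" by auto
    let ?u = "fst p - fst z" and ?v = "snd p - snd z"
    have "(\<lambda>x. (\<lambda>(i,j). \<bar>a i j * ?u ^ i * ?v ^ j\<bar>) x + (\<lambda>(i,j). \<bar>b i j * ?u ^ i * ?v ^ j\<bar>) x)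
        summable_on UNIV"
      by (rule summable_on_add[OF has_power_seriesD(1)[OF A pr] has_power_seriesD(1)[OF B ps]])
    then show "(\<lambda>(i,j). \<bar>(a i j + b i j) * ?u ^ i * ?v ^ j\<bar>) summable_on UNIV"
      by (rule summable_on_comparison_test) (auto simp: distrib_right abs_triangle_ineq)
    have "((\<lambda>x. (\<lambda>(i,j). a i j * ?u ^ i * ?v ^ j) x + (\<lambda>(i,j). b i j * ?u ^ i * ?v ^ j) x)
        has_sum (f p + g p)) UNIV"
      by (rule has_sum_add[OF has_power_seriesD(2)[OF A pr] has_power_seriesD(2)[OF B ps]])
    moreover have "(\<lambda>x. (\<lambda>(i,j). a i j * ?u ^ i * ?v ^ j) x + (\<lambda>(i,j). b i j * ?u ^ i * ?v ^ j) x)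
        = (\<lambda>(i,j). (a i j + b i j) * ?u ^ i * ?v ^ j)"
      by (rule ext) (simp add: split_beta distrib_right)
    ultimately show "((\<lambda>(i,j). (a i j + b i j) * ?u ^ i * ?v ^ j) has_sum (f p + g p)) UNIV"
      by simp
  qed
  then show "\<exists>r c. has_power_series c z r (\<lambda>p. f p + g p)" by blast
qed

lemma real_analytic_on_comp_swap:
  "real_analytic_on f \<Omega> \<Longrightarrow> real_analytic_on (f \<circ> prod.swap) (prod.swap ` \<Omega>)"
  unfolding real_analytic_on_iff_has_power_series using has_power_series_comp_swap by fastforce

lemma real_analytic_on_has_derivative:
  "real_analytic_on f \<Omega> \<Longrightarrow> z \<in> \<Omega> \<Longrightarrow> (f has_derivative differential f z) (at z)"
  unfolding real_analytic_on_iff_has_power_series using has_power_series_has_derivative by blast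

lemma real_analytic_on_imp_continuous_on:
  assumes "real_analytic_on f \<Omega>" shows "continuous_on \<Omega> f"
  by (rule continuous_at_imp_continuous_on)
    (use real_analytic_on_has_derivative[OF assms] has_derivative_continuous in blast)

lemma real_analytic_on_partials_commute:
  assumes "real_analytic_on f \<Omega>" "z \<in> \<Omega>"
  shows "partial2 (partial1 f) z = partial1 (partial2 f) z"
proof -
  obtain r a where S: "has_power_series a z r f"
    using assms unfolding real_analytic_on_iff_has_power_series by blast
  show ?thesis
    using has_power_series_partials_center(2)[OF has_power_series_partial1[OF S]]
      has_power_series_partials_center(1)[OF has_power_series_partial2[OF S]] by simp
qed

lemma real_analytic_on_laplacian: "real_analytic_on f \<Omega> \<Longrightarrow> real_analytic_on (laplacian f) \<Omega>"
  unfolding laplacian_def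
  by (intro real_analytic_on_add real_analytic_on_partial1 real_analytic_on_partial2)

lemma has_power_series_iterated_partial2:
  assumes "has_power_series a z r f"
  shows "\<exists>r'. has_power_series (\<lambda>k l. fact (l + j) / fact l * a k (l + j)) z r' ((partial2 ^^ j) f)"
proof (induction j)
  case 0 then show ?case using assms by auto
next
  case (Suc j)
  then obtain r' where
    "has_power_series (\<lambda>k l. fact (l + j) / fact l * a k (l + j)) z r' ((partial2 ^^ j) f)" by blast
  from has_power_series_partial2[OF this]
  have "has_power_series (\<lambda>k l. real (Suc l) * (fact (Suc l + j) / fact (Suc l) * a k (Suc l + j)))
      z (r'/4) ((partial2 ^^ Suc j) f)" by simp
  moreover have "(\<lambda>k l. real (Suc l) * (fact (Suc l + j) / fact (Suc l) * a k (Suc l + j)))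
      = (\<lambda>k l. fact (l + Suc j) / fact l * a k (l + Suc j))"
    by (auto simp: fun_eq_iff)
  ultimately show ?case by auto
qed

lemma has_power_series_iterated_partial1:
  assumes "has_power_series a z r f"
  shows "\<exists>r'. has_power_series (\<lambda>k l. fact (k + i) / fact k * a (k + i) l) z r' ((partial1 ^^ i) f)"
proof (induction i)
  case 0 then show ?case using assms by auto
next
  case (Suc i)
  then obtain r' where
    "has_power_series (\<lambda>k l. fact (k + i) / fact k * a (k + i) l) z r' ((partial1 ^^ i) f)" by blast
  from has_power_series_partial1[OF this]
  have "has_power_series (\<lambda>k l. real (Suc k) * (fact (Suc k + i) / fact (Suc k) * a (Suc k + i) l))
      z (r'/4) ((partial1 ^^ Suc i) f)" by simp
  moreover have "(\<lambda>k l. real (Suc k) * (fact (Suc k + i) / fact (Suc k) * a (Suc k + i) l))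
      = (\<lambda>k l. fact (k + Suc i) / fact k * a (k + Suc i) l)"
    by (auto simp: fun_eq_iff)
  ultimately show ?case by auto
qed

lemma has_power_series_iterated_partials_center:
  assumes "has_power_series a z r f"
  shows "(partial1 ^^ i) ((partial2 ^^ j) f) z = fact i * fact j * a i j"
proof -
  obtain r' where "has_power_series (\<lambda>k l. fact (l + j) / fact l * a k (l + j)) z r' ((partial2 ^^ j) f)"
    using has_power_series_iterated_partial2[OF assms] by blast
  from has_power_series_iterated_partial1[OF this, of i]
  obtain r'' where "has_power_series (\<lambda>k l. fact (k + i) / fact k * (fact (l + j) / fact l * a (k + i) (l + j)))
      z r'' ((partial1 ^^ i) ((partial2 ^^ j) f))" by auto
  from has_power_series_center[OF this] show ?thesis by simp
qed

lemma partials_eq_0_if_constant_on_open: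
  assumes "open V" "\<forall>y\<in>V. g y = c" "y \<in> V"
  shows "partial1 g y = 0" "partial2 g y = 0"
proof -
  obtain e where e: "e > 0" "ball y e \<subseteq> V" using assms openE by blast
  have "((\<lambda>t. g (t, snd y)) has_real_derivative 0) (at (fst y))"
  proof (rule has_field_derivative_transform_within_open[OF DERIV_const[of c] open_ball])
    show "fst y \<in> ball (fst y) e" using e by simp
    fix t assume "t \<in> ball (fst y) e"
    then have "(t, snd y) \<in> ball y e" by (cases y) (simp add: dist_Pair_Pair)
    then show "c = g (t, snd y)" using e assms by auto
  qed
  then show "partial1 g y = 0" unfolding partial1_def by (rule DERIV_imp_deriv)
  have "((\<lambda>t. g (fst y, t)) has_real_derivative 0) (at (snd y))"
  proof (rule has_field_derivative_transform_within_open[OF DERIV_const[of c] open_ball])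
    show "snd y \<in> ball (snd y) e" using e by simp
    fix t assume "t \<in> ball (snd y) e"
    then have "(fst y, t) \<in> ball y e" by (cases y) (simp add: dist_Pair_Pair)
    then show "c = g (fst y, t)" using e assms by auto
  qed
  then show "partial2 g y = 0" unfolding partial2_def by (rule DERIV_imp_deriv)
qed

lemma iterated_partials_eq_0_if_constant_on_open:
  assumes V: "open V" and c: "\<forall>y\<in>V. g y = c" and ij: "1 \<le> i + j" and y: "y \<in> V"
  shows "(partial1 ^^ i) ((partial2 ^^ j) g) y = 0"
proof -
  have iter1: "\<forall>y\<in>V. (partial1 ^^ n) h y = (if n = 0 then d else 0)" if "\<forall>y\<in>V. h y = d" for h d n
    by (induction n) (use that partials_eq_0_if_constant_on_open(1)[OF V] in auto)
  have iter2: "\<forall>y\<in>V. (partial2 ^^ n) g y = (if n = 0 then c else 0)" for n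
    by (induction n) (use c partials_eq_0_if_constant_on_open(2)[OF V] in auto)
  show ?thesis
  proof (cases "j = 0")
    case True then show ?thesis using iter1[OF c, of i] ij y by auto
  next
    case False
    then have "\<forall>y\<in>V. (partial2 ^^ j) g y = 0" using iter2[of j] by auto
    from iter1[OF this, of i] show ?thesis using y by auto
  qed
qed

text \<open>The identity theorem: the points where all derivatives of positive order vanish form a set
  that is open (by the power series expansion) and closed (by continuity) in \<open>\<Omega>\<close>.\<close>

lemma openin_flat_points:
  assumes "real_analytic_on \<psi> \<Omega>"
  shows "openin (top_of_set \<Omega>) {x\<in>\<Omega>. \<forall>i j. 1 \<le> i + j \<longrightarrow> (partial1 ^^ i) ((partial2 ^^ j) \<psi>) x = 0}"
    (is "openin _ ?T")
  unfolding openin_euclidean_subtopology_iff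
proof (intro conjI ballI)
  show "?T \<subseteq> \<Omega>" by auto
  fix x assume x: "x \<in> ?T"
  then obtain r a where S: "has_power_series a x r \<psi>"
    using assms unfolding real_analytic_on_iff_has_power_series by blast
  have "a i j = 0" if "1 \<le> i + j" for i j
    using has_power_series_iterated_partials_center[OF S, of i j] x that by simp
  then have c: "\<forall>p\<in>ball x r. \<psi> p = a 0 0" using has_power_series_const_term[OF S] by blast
  show "\<exists>e>0. \<forall>x'\<in>\<Omega>. dist x' x < e \<longrightarrow> x' \<in> ?T"
  proof (intro exI[of _ r] conjI ballI impI)
    show "r > 0" using has_power_series_radius_pos[OF S] .
    fix x' assume x': "x' \<in> \<Omega>" "dist x' x < r"
    then show "x' \<in> ?T"
      using iterated_partials_eq_0_if_constant_on_open[OF open_ball c] by (auto simp: dist_commute)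
  qed
qed

lemma closedin_flat_points:
  assumes "real_analytic_on \<psi> \<Omega>"
  shows "closedin (top_of_set \<Omega>) {x\<in>\<Omega>. \<forall>i j. 1 \<le> i + j \<longrightarrow> (partial1 ^^ i) ((partial2 ^^ j) \<psi>) x = 0}"
proof -
  let ?I = "{ij :: nat \<times> nat. 1 \<le> fst ij + snd ij}"
  have I: "(1, 0) \<in> ?I" by simp
  have "{x\<in>\<Omega>. \<forall>i j. 1 \<le> i + j \<longrightarrow> (partial1 ^^ i) ((partial2 ^^ j) \<psi>) x = 0}
      = (\<Inter>ij\<in>?I. {x\<in>\<Omega>. (partial1 ^^ fst ij) ((partial2 ^^ snd ij) \<psi>) x = 0})"
  proof (intro set_eqI iffI)
    fix x assume x: "x \<in> (\<Inter>ij\<in>?I. {x\<in>\<Omega>. (partial1 ^^ fst ij) ((partial2 ^^ snd ij) \<psi>) x = 0})"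
    have "x \<in> \<Omega>" using x I by blast
    then show "x \<in> {x\<in>\<Omega>. \<forall>i j. 1 \<le> i + j \<longrightarrow> (partial1 ^^ i) ((partial2 ^^ j) \<psi>) x = 0}"
      using x by auto
  qed auto
  also have "closedin (top_of_set \<Omega>) \<dots>"
  proof (rule closedin_INT)
    show "?I \<noteq> {}" using I by blast
    show "closedin (top_of_set \<Omega>) {x\<in>\<Omega>. (partial1 ^^ fst ij) ((partial2 ^^ snd ij) \<psi>) x = 0}" for ij
      by (intro continuous_closedin_preimage_constant real_analytic_on_imp_continuous_on
          real_analytic_on_iterated_partials assms)
  qed
  finally show ?thesis .
qed

lemma real_analytic_nonconstant_imp_Dk_nonzero:
  assumes \<Omega>: "open \<Omega>" "connected \<Omega>" and an: "real_analytic_on \<psi> \<Omega>"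
    and nc: "\<not> (\<exists>c. \<forall>x\<in>\<Omega>. \<psi> x = c)" and x0: "x0 \<in> \<Omega>"
  shows "\<exists>k\<ge>1. Dk_nonzero \<psi> k x0"
proof (rule ccontr)
  let ?T = "{x\<in>\<Omega>. \<forall>i j. 1 \<le> i + j \<longrightarrow> (partial1 ^^ i) ((partial2 ^^ j) \<psi>) x = 0}"
  assume "\<not> (\<exists>k\<ge>1. Dk_nonzero \<psi> k x0)"
  then have "x0 \<in> ?T" using x0 unfolding Dk_nonzero_def by auto
  then have T: "?T = \<Omega>"
    using \<Omega>(2) openin_flat_points[OF an] closedin_flat_points[OF an] unfolding connected_clopen by blast
  have "\<psi> constant_on \<Omega>"
  proof (rule has_derivative_zero_connected_constant_on[OF \<Omega>(2,1) finite.emptyI])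
    show "continuous_on \<Omega> \<psi>" by (rule real_analytic_on_imp_continuous_on[OF an])
    show "\<forall>x\<in>\<Omega> - {}. (\<psi> has_derivative (\<lambda>h. 0)) (at x within \<Omega>)"
    proof
      fix x assume "x \<in> \<Omega> - {}"
      then have x: "x \<in> \<Omega>" and flat: "\<forall>i j. 1 \<le> i + j \<longrightarrow> (partial1 ^^ i) ((partial2 ^^ j) \<psi>) x = 0"
        using T by auto
      have "partial1 \<psi> x = 0" "partial2 \<psi> x = 0"
        using flat[rule_format, of 1 0] flat[rule_format, of 0 1] by simp_all
      then show "(\<psi> has_derivative (\<lambda>h. 0)) (at x within \<Omega>)"
        using real_analytic_on_has_derivative[OF an x]
        by (auto simp: differential_def intro: has_derivative_at_withinI)
    qed
  qed
  then show False using nc unfolding constant_on_def by blast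
qed

lemma Dk_nonzero_1_iff: "Dk_nonzero f 1 x \<longleftrightarrow> partial1 f x \<noteq> 0 \<or> partial2 f x \<noteq> 0"
proof -
  have e: "i + j = 1 \<longleftrightarrow> (i = 1 \<and> j = 0) \<or> (i = 0 \<and> j = (1::nat))" for i j by arith
  show ?thesis unfolding Dk_nonzero_def e by (simp add: conj_disj_distribR ex_disj_distrib)
qed

lemma Dk_nonzero_2_iff:
  "Dk_nonzero f 2 x \<longleftrightarrow>
     partial1 (partial1 f) x \<noteq> 0 \<or> partial1 (partial2 f) x \<noteq> 0 \<or> partial2 (partial2 f) x \<noteq> 0"
proof -
  have e: "i + j = 2 \<longleftrightarrow> (i = 2 \<and> j = 0) \<or> (i = 1 \<and> j = 1) \<or> (i = 0 \<and> j = (2::nat))" for i j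
    by arith
  show ?thesis
    unfolding Dk_nonzero_def e by (simp add: conj_disj_distribR ex_disj_distrib numeral_2_eq_2)
qed

lemma vanishing_order_gt_1_imp_gradient_zero:
  assumes "vanishing_order f x > 1"
  shows "partial1 f x = 0" "partial2 f x = 0"
proof -
  have "\<not> Dk_nonzero f 1 x"
  proof
    assume "Dk_nonzero f 1 x"
    then have "vanishing_order f x \<le> 1" unfolding vanishing_order_def by (intro Least_le) simp
    then show False using assms by simp
  qed
  then show "partial1 f x = 0" "partial2 f x = 0" unfolding Dk_nonzero_1_iff by auto
qed

lemma vanishing_order_eq_2I:
  assumes "partial1 f x = 0" "partial2 f x = 0" "Dk_nonzero f 2 x"
  shows "vanishing_order f x = 2"
  unfolding vanishing_order_def
proof (rule Least_equality)
  show "1 \<le> (2::nat) \<and> Dk_nonzero f 2 x" using assms by simp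
  have "\<not> Dk_nonzero f 1 x" unfolding Dk_nonzero_1_iff using assms by simp
  then show "2 \<le> k" if "1 \<le> k \<and> Dk_nonzero f k x" for k
    using that by (cases "k = 1") auto
qed

lemma Dk_nonzero_vanishing_order:
  assumes "\<exists>k\<ge>1. Dk_nonzero f k x"
  shows "Dk_nonzero f (vanishing_order f x) x"
  using LeastI_ex[of "\<lambda>k. 1 \<le> k \<and> Dk_nonzero f k x"] assms unfolding vanishing_order_def by blast

section \<open>A Sard-type lemma\<close>

lemma negligible_image_if_derivative_zero:
  fixes W :: "real \<Rightarrow> real"
  assumes der: "\<And>x. x \<in> Z \<Longrightarrow> (W has_derivative (\<lambda>h. 0)) (at x within Z)"
  shows "negligible (W ` Z)"
proof -
  \<comment> \<open>transport to \<open>real^1\<close>, where Sard's lemma is available\<close>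
  define f :: "real^1 \<Rightarrow> real^1" where "f = (\<lambda>y. vec (W (y$1)))"
  have "negligible (f ` (vec ` Z))"
  proof (rule baby_Sard[where f' = "\<lambda>x h. 0"])
    fix x :: "real^1" assume "x \<in> vec ` Z"
    then obtain z where z: "z \<in> Z" "x = vec z" by auto
    have "(W has_derivative (\<lambda>x. x * (\<lambda>_. 0::real) z)) (at z within Z)"
      using der[OF z(1)] by simp
    from has_derivative_vector_1[OF this]
    have "((\<lambda>x::real^1. vec (W (x $ 1)) :: real^1) has_derivative (\<lambda>h. 0)) (at (vec z) within vec ` Z)"
      by (rule has_derivative_eq_rhs) auto
    then show "(f has_derivative (\<lambda>h. 0)) (at x within vec ` Z)" using z(2) by (simp add: f_def)
    have "matrix (\<lambda>h::real^1. 0::real^1) = 0" by (simp add: matrix_def vec_eq_iff)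
    then show "rank (matrix (\<lambda>h::real^1. 0::real^1)) < CARD(1)" by simp
  qed simp
  moreover have "f ` (vec ` Z) = vec ` (W ` Z)" by (auto simp: f_def image_image)
  ultimately have n: "negligible (vec ` (W ` Z) :: (real^1) set)" by simp
  have "negligible ((\<lambda>y::real^1. y$1) ` (vec ` (W ` Z)))"
  proof (rule negligible_differentiable_image_negligible[OF _ n])
    show "(\<lambda>y::real^1. y$1) differentiable_on vec ` (W ` Z)"
      by (rule bounded_linear_imp_differentiable_on) (rule bounded_linear_vec_nth)
  qed simp
  moreover have "(\<lambda>y::real^1. y$1) ` (vec ` (W ` Z)) = W ` Z" by (auto simp: image_image)
  ultimately show ?thesis by simp
qed

lemma negligible_image_if_locally_negligible:
  fixes f :: "'a::second_countable_topology \<Rightarrow> 'b::euclidean_space"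
  assumes "\<And>x. x \<in> S \<Longrightarrow> \<exists>V. open V \<and> x \<in> V \<and> negligible (f ` (S \<inter> V))"
  shows "negligible (f ` S)"
proof -
  define \<F> where "\<F> = {V. open V \<and> negligible (f ` (S \<inter> V))}"
  obtain \<F>' where \<F>': "\<F>' \<subseteq> \<F>" "countable \<F>'" "\<Union>\<F>' = \<Union>\<F>"
    using Lindelof[of \<F>] by (auto simp: \<F>_def)
  have "f ` S \<subseteq> (\<Union>V\<in>\<F>'. f ` (S \<inter> V))"
  proof
    fix y assume "y \<in> f ` S"
    then obtain x where x: "x \<in> S" "y = f x" by blast
    then obtain V where "V \<in> \<F>" "x \<in> V" using assms by (auto simp: \<F>_def)
    then obtain V' where "V' \<in> \<F>'" "x \<in> V'" using \<F>'(3) by blast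
    then show "y \<in> (\<Union>V\<in>\<F>'. f ` (S \<inter> V))" using x by blast
  qed
  moreover have "negligible (\<Union>V\<in>\<F>'. f ` (S \<inter> V))"
    using \<F>'(1,2) by (intro negligible_countable_Union) (auto simp: \<F>_def)
  ultimately show ?thesis using negligible_subset by blast
qed

lemma mean_value_differential:
  assumes U: "convex U" and q: "q \<in> U" and q': "q' \<in> U"
    and dQ: "\<And>y. y \<in> U \<Longrightarrow> (Q has_derivative differential Q y) (at y)"
  obtains \<xi> where "\<xi> \<in> U" "Q q' - Q q = differential Q \<xi> (q' - q)"
proof -
  define g where "g = (\<lambda>t::real. q + t *\<^sub>R (q' - q))"
  have gU: "g t \<in> U" if "0 \<le> t" "t \<le> 1" for t
  proof -
    have "(1 - t) *\<^sub>R q + t *\<^sub>R q' \<in> U" using convexD[OF U q q'] that by simp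
    moreover have "(1 - t) *\<^sub>R q + t *\<^sub>R q' = g t" by (simp add: g_def algebra_simps)
    ultimately show ?thesis by simp
  qed
  have der: "((\<lambda>t. Q (g t)) has_real_derivative differential Q (g t) (q' - q)) (at t)"
    if "0 \<le> t" "t \<le> 1" for t
  proof -
    have dg: "(g has_derivative (\<lambda>s. s *\<^sub>R (q' - q))) (at t)"
      unfolding g_def by (rule has_derivative_eq_rhs, (rule derivative_intros)+) auto
    have "((\<lambda>t. Q (g t)) has_derivative (\<lambda>s. differential Q (g t) (s *\<^sub>R (q' - q)))) (at t)"
      by (rule has_derivative_compose[OF dg dQ[OF gU[OF that]]])
    then show ?thesis unfolding has_field_derivative_def
      by (rule has_derivative_eq_rhs) (auto simp: fun_eq_iff differential_def algebra_simps)
  qed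
  obtain t where "0 < t" "t < 1" "Q (g 1) - Q (g 0) = (1 - 0) * differential Q (g t) (q' - q)"
    using MVT2[of 0 1 "\<lambda>t. Q (g t)" "\<lambda>t. differential Q (g t) (q' - q)"] der by auto
  then show thesis using that[of "g t"] gU[of t] by (simp add: g_def)
qed

lemma level_set_Lipschitz_graph:
  assumes U: "convex U" and q: "q \<in> U" "q' \<in> U" "Q q' = Q q"
    and dQ: "\<And>y. y \<in> U \<Longrightarrow> (Q has_derivative differential Q y) (at y)"
    and c: "c > 0" "\<And>y. y \<in> U \<Longrightarrow> c \<le> \<bar>partial2 Q y\<bar>"
    and K: "\<And>y. y \<in> U \<Longrightarrow> \<bar>partial1 Q y\<bar> \<le> K"
  shows "\<bar>snd q' - snd q\<bar> \<le> K / c * \<bar>fst q' - fst q\<bar>"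
proof -
  obtain \<xi> where \<xi>: "\<xi> \<in> U" "Q q' - Q q = differential Q \<xi> (q' - q)"
    using mean_value_differential[OF U q(1,2) dQ] by blast
  then have "partial2 Q \<xi> * (snd q' - snd q) = - (partial1 Q \<xi> * (fst q' - fst q))"
    using q(3) by (simp add: differential_def algebra_simps)
  then have e: "\<bar>partial2 Q \<xi>\<bar> * \<bar>snd q' - snd q\<bar> = \<bar>partial1 Q \<xi>\<bar> * \<bar>fst q' - fst q\<bar>"
    by (metis abs_minus_cancel abs_mult)
  have "c * \<bar>snd q' - snd q\<bar> \<le> \<bar>partial2 Q \<xi>\<bar> * \<bar>snd q' - snd q\<bar>"
    using c(2)[OF \<xi>(1)] by (rule mult_right_mono) simp
  also have "\<dots> \<le> K * \<bar>fst q' - fst q\<bar>" unfolding e using K[OF \<xi>(1)] by (rule mult_right_mono) simp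
  finally show ?thesis using c(1) by (simp add: field_simps)
qed

text \<open>Differentiating \<open>P \<partial>\<^sub>2w - Q \<partial>\<^sub>1w = 0\<close> in the second variable at a common zero of \<open>P\<close> and \<open>Q\<close>.\<close>
lemma bracket_identity_derivative_at_common_zero:
  assumes U: "open U" and q: "q \<in> U" and z: "P q = 0" "Q q = 0"
    and dP: "(P has_derivative differential P q) (at q)"
    and dQ: "(Q has_derivative differential Q q) (at q)"
    and cw: "isCont (partial1 w) q" "isCont (partial2 w) q"
    and br: "\<forall>y\<in>U. P y * partial2 w y - Q y * partial1 w y = 0"
  shows "partial2 P q * partial2 w q - partial2 Q q * partial1 w q = 0"
proof -
  define g where "g = (\<lambda>t::real. (fst q, snd q + t))"
  have g0: "g 0 = q" by (simp add: g_def)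
  have dg: "(g has_derivative (\<lambda>s. (0, s))) (at 0)"
    unfolding g_def by (rule has_derivative_eq_rhs, (rule derivative_intros)+) auto
  have quot: "((\<lambda>t. F (g t) / t) \<longlongrightarrow> partial2 F q) (at 0)"
    if "(F has_derivative differential F q) (at q)" "F q = 0" for F
  proof -
    have "((\<lambda>t. F (g t)) has_derivative (\<lambda>s. differential F q (0, s))) (at 0)"
      by (rule has_derivative_compose[OF dg]) (use that g0 in simp)
    then have "((\<lambda>t. F (g t)) has_real_derivative partial2 F q) (at 0)"
      unfolding has_field_derivative_def
      by (rule has_derivative_eq_rhs) (auto simp: fun_eq_iff differential_def)
    then show ?thesis unfolding has_field_derivative_iff by (simp add: g0 that(2))
  qed
  have "(g \<longlongrightarrow> g 0) (at 0)" unfolding g_def by (intro tendsto_intros)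
  then have gt: "(g \<longlongrightarrow> q) (at 0)" by (simp add: g0)
  have lim: "((\<lambda>t. P (g t) / t * partial2 w (g t) - Q (g t) / t * partial1 w (g t))
      \<longlongrightarrow> partial2 P q * partial2 w q - partial2 Q q * partial1 w q) (at 0)"
    by (intro tendsto_intros quot dP dQ z isCont_tendsto_compose[OF cw(1) gt]
        isCont_tendsto_compose[OF cw(2) gt])
  have "\<forall>\<^sub>F t in at 0. g t \<in> U" using gt U q by (rule topological_tendstoD)
  then have "\<forall>\<^sub>F t in at 0. P (g t) / t * partial2 w (g t) - Q (g t) / t * partial1 w (g t) = 0"
  proof (rule eventually_mono)
    fix t assume "g t \<in> U"
    then have "(P (g t) * partial2 w (g t) - Q (g t) * partial1 w (g t)) / t = 0" using br by simp
    then show "P (g t) / t * partial2 w (g t) - Q (g t) / t * partial1 w (g t) = 0"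
      by (simp add: diff_divide_distrib)
  qed
  then have "((\<lambda>t. P (g t) / t * partial2 w (g t) - Q (g t) / t * partial1 w (g t)) \<longlongrightarrow> 0) (at 0)"
    by (rule tendsto_eventually)
  from tendsto_unique[OF _ lim this] show ?thesis by simp
qed

lemma flat_on_level_set_if_derivative_proportional:
  fixes w Q :: "'a::real_normed_vector \<Rightarrow> real"
  assumes dw: "(w has_derivative (\<lambda>h. k * DQ h)) (at x)" and dQ: "(Q has_derivative DQ) (at x)"
    and e: "e > 0"
  shows "\<exists>d>0. \<forall>y. norm (y - x) < d \<longrightarrow> Q y = Q x \<longrightarrow> \<bar>w y - w x\<bar> \<le> e * norm (y - x)"
proof -
  define e2 where "e2 = e / (2 * (\<bar>k\<bar> + 1))"
  have e2: "e2 > 0" "\<bar>k\<bar> * e2 \<le> e/2" using e by (auto simp: e2_def field_simps)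
  obtain d1 where d1: "d1 > 0" "\<And>y. norm (y - x) < d1 \<Longrightarrow>
      norm (w y - w x - k * DQ (y - x)) \<le> e/2 * norm (y - x)"
    using dw e unfolding has_derivative_at_alt by (meson half_gt_zero)
  obtain d2 where d2: "d2 > 0" "\<And>y. norm (y - x) < d2 \<Longrightarrow>
      norm (Q y - Q x - DQ (y - x)) \<le> e2 * norm (y - x)"
    using dQ e2(1) unfolding has_derivative_at_alt by meson
  show ?thesis
  proof (intro exI[of _ "min d1 d2"] conjI allI impI)
    show "min d1 d2 > 0" using d1 d2 by simp
    fix y assume y: "norm (y - x) < min d1 d2" and Qy: "Q y = Q x"
    have "\<bar>k * DQ (y - x)\<bar> \<le> \<bar>k\<bar> * (e2 * norm (y - x))"
      using d2(2)[of y] y Qy by (simp add: abs_mult mult_left_mono)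
    also have "\<dots> = (\<bar>k\<bar> * e2) * norm (y - x)" by (simp add: mult.assoc)
    also have "\<dots> \<le> e/2 * norm (y - x)" using e2(2) by (rule mult_right_mono) simp
    finally have "\<bar>k * DQ (y - x)\<bar> \<le> e/2 * norm (y - x)" .
    then show "\<bar>w y - w x\<bar> \<le> e * norm (y - x)"
      using d1(2)[of y] y abs_triangle_ineq[of "w y - w x - k * DQ (y - x)" "k * DQ (y - x)"] by simp
  qed
qed

lemma negligible_image_common_zeros:
  assumes U: "open U" "convex U"
    and dP: "\<And>q. q \<in> U \<Longrightarrow> (P has_derivative differential P q) (at q)"
    and dQ: "\<And>q. q \<in> U \<Longrightarrow> (Q has_derivative differential Q q) (at q)"
    and dw: "\<And>q. q \<in> U \<Longrightarrow> (w has_derivative differential w q) (at q)"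
    and cw: "continuous_on U (partial1 w)" "continuous_on U (partial2 w)"
    and sym: "\<And>q. q \<in> U \<Longrightarrow> partial2 P q = partial1 Q q"
    and br: "\<forall>q\<in>U. P q * partial2 w q - Q q * partial1 w q = 0"
    and c: "c > 0" "\<And>q. q \<in> U \<Longrightarrow> c \<le> \<bar>partial2 Q q\<bar>"
    and K: "\<And>q. q \<in> U \<Longrightarrow> \<bar>partial1 Q q\<bar> \<le> K"
  shows "negligible (w ` {q\<in>U. P q = 0 \<and> Q q = 0})"
proof -
  define T where "T = {q\<in>U. P q = 0 \<and> Q q = 0}"
  define L where "L = 1 + K / c"
  have nb: "norm (q - q0) \<le> L * \<bar>fst q - fst q0\<bar>" if "q0 \<in> T" "q \<in> T" for q0 q
  proof -
    have "q - q0 = (fst q - fst q0, snd q - snd q0)" by (cases q, cases q0) simp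
    then have "norm (q - q0) \<le> \<bar>fst q - fst q0\<bar> + \<bar>snd q - snd q0\<bar>"
      using norm_Pair_le[of "fst q - fst q0" "snd q - snd q0"] by simp
    also have "\<dots> \<le> \<bar>fst q - fst q0\<bar> + K / c * \<bar>fst q - fst q0\<bar>"
      using level_set_Lipschitz_graph[OF U(2) _ _ _ dQ c K, of q0 q] that by (simp add: T_def)
    finally show ?thesis by (simp add: L_def algebra_simps)
  qed
  \<comment> \<open>so \<open>T\<close> is a graph over its first projection, and \<open>w\<close> becomes a function \<open>W\<close> of one variable\<close>
  define W where "W = (\<lambda>x. w (THE q. q \<in> T \<and> fst q = x))"
  have uniq: "q' = q" if "q \<in> T" "q' \<in> T" "fst q' = fst q" for q q'
    using nb[OF that(1,2)] that(3) by simp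
  have Wq: "W (fst q) = w q" if "q \<in> T" for q
  proof -
    have "(THE q'. q' \<in> T \<and> fst q' = fst q) = q"
      by (rule the_equality) (use that uniq in blast)+
    then show ?thesis by (simp add: W_def)
  qed
  have "negligible (W ` fst ` T)"
  proof (rule negligible_image_if_derivative_zero)
    fix x0 assume "x0 \<in> fst ` T"
    then obtain q0 where q0: "q0 \<in> T" "x0 = fst q0" by auto
    then have q0U: "q0 \<in> U" and z: "P q0 = 0" "Q q0 = 0" by (auto simp: T_def)
    have L1: "L \<ge> 1" using K[OF q0U] c by (auto simp: L_def)
    have Qy: "partial2 Q q0 \<noteq> 0" using c(1) c(2)[OF q0U] by auto
    have cont: "isCont (partial1 w) q0" "isCont (partial2 w) q0"
      using cw U(1) q0U continuous_on_eq_continuous_at by blast+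
    have "partial2 P q0 * partial2 w q0 - partial2 Q q0 * partial1 w q0 = 0"
      by (rule bracket_identity_derivative_at_common_zero[OF U(1) q0U z dP[OF q0U] dQ[OF q0U] cont br])
    then have "differential w q0 = (\<lambda>h. partial2 w q0 / partial2 Q q0 * differential Q q0 h)"
      using sym[OF q0U] Qy by (auto simp: fun_eq_iff differential_def field_simps)
    then have dw': "(w has_derivative (\<lambda>h. partial2 w q0 / partial2 Q q0 * differential Q q0 h)) (at q0)"
      using dw[OF q0U] by simp
    show "(W has_derivative (\<lambda>h. 0)) (at x0 within fst ` T)"
      unfolding has_derivative_within_alt
    proof (intro conjI allI impI bounded_linear_zero)
      fix e :: real assume e: "e > 0"
      obtain d where d: "d > 0"
        and flat: "\<And>y. norm (y - q0) < d \<Longrightarrow> Q y = Q q0 \<Longrightarrow> \<bar>w y - w q0\<bar> \<le> e / L * norm (y - q0)"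
        using flat_on_level_set_if_derivative_proportional[OF dw' dQ[OF q0U], of "e / L"] e L1 by auto
      show "\<exists>d>0. \<forall>y\<in>fst ` T. norm (y - x0) < d \<longrightarrow> norm (W y - W x0 - 0) \<le> e * norm (y - x0)"
      proof (intro exI[of _ "d / L"] conjI ballI impI)
        show "d / L > 0" using d L1 by simp
        fix y assume "y \<in> fst ` T" and yd: "norm (y - x0) < d / L"
        then obtain q where q: "q \<in> T" "y = fst q" by auto
        have nq: "norm (q - q0) \<le> L * \<bar>y - x0\<bar>" using nb[OF q0(1) q(1)] q q0 by simp
        also have "\<dots> < d" using yd L1 by (simp add: field_simps)
        finally have "\<bar>w q - w q0\<bar> \<le> e / L * norm (q - q0)"
          using flat q(1) z by (simp add: T_def)
        also have "\<dots> \<le> e / L * (L * \<bar>y - x0\<bar>)" using nq e L1 by (intro mult_left_mono) auto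
        finally show "norm (W y - W x0 - 0) \<le> e * norm (y - x0)" using Wq q q0 L1 by simp
      qed
    qed
  qed
  moreover have "w ` T = W ` fst ` T" by (auto simp: image_image Wq)
  ultimately show ?thesis by (simp add: T_def)
qed

section \<open>The Laplacian on the critical set\<close>

lemma laplacian_comp_swap: "laplacian (f \<circ> prod.swap) = laplacian f \<circ> prod.swap"
  by (simp add: fun_eq_iff laplacian_def partial1_comp_swap partial2_comp_swap add.commute)

lemma poisson_bracket_comp_swap:
  "poisson_bracket (f \<circ> prod.swap) (g \<circ> prod.swap) = (\<lambda>q. - poisson_bracket f g (prod.swap q))"
  by (simp add: fun_eq_iff poisson_bracket_def partial1_comp_swap partial2_comp_swap)

lemma open_swap_image: "open S \<Longrightarrow> open (prod.swap ` (S :: (real \<times> real) set))"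
proof -
  assume "open S"
  then have "open (prod.swap -` S)" by (intro open_vimage continuous_on_swap)
  moreover have "prod.swap ` S = prod.swap -` S"
  proof (intro set_eqI iffI)
    fix x assume "x \<in> prod.swap -` S"
    then show "x \<in> prod.swap ` S" by (intro image_eqI[of _ _ "prod.swap x"]) auto
  qed auto
  ultimately show ?thesis by simp
qed

lemma locally_negligible_laplacian_image_vertical:
  assumes \<Omega>: "open \<Omega>" and an: "real_analytic_on \<psi> \<Omega>"
    and br: "\<forall>q\<in>\<Omega>. poisson_bracket \<psi> (laplacian \<psi>) q = 0"
    and p: "p \<in> \<Omega>" and nz: "partial2 (partial2 \<psi>) p \<noteq> 0"
  shows "\<exists>\<delta>>0. ball p \<delta> \<subseteq> \<Omega> \<and>
           negligible (laplacian \<psi> ` {q\<in>ball p \<delta>. partial1 \<psi> q = 0 \<and> partial2 \<psi> q = 0})"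
proof -
  let ?P = "partial1 \<psi>" and ?Q = "partial2 \<psi>" and ?w = "laplacian \<psi>"
  have anP: "real_analytic_on ?P \<Omega>" and anQ: "real_analytic_on ?Q \<Omega>"
    using an by (auto intro: real_analytic_on_partial1 real_analytic_on_partial2)
  have anw: "real_analytic_on ?w \<Omega>" by (rule real_analytic_on_laplacian[OF an])
  have cont: "continuous_on \<Omega> (partial1 ?Q)" "continuous_on \<Omega> (partial2 ?Q)"
    "continuous_on \<Omega> (partial1 ?w)" "continuous_on \<Omega> (partial2 ?w)"
    by (intro real_analytic_on_imp_continuous_on real_analytic_on_partial1 real_analytic_on_partial2
        anQ anw)+
  define c where "c = \<bar>partial2 ?Q p\<bar> / 2"
  have c: "c > 0" using nz by (simp add: c_def)
  obtain r0 where r0: "r0 > 0" "ball p r0 \<subseteq> \<Omega>" using \<Omega> p openE by blast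
  obtain \<delta>1 where \<delta>1: "\<delta>1 > 0" "\<And>q. q \<in> \<Omega> \<Longrightarrow> dist q p < \<delta>1 \<Longrightarrow> dist (partial2 ?Q q) (partial2 ?Q p) < c"
    using cont(2) p c unfolding continuous_on_iff by meson
  obtain \<delta>2 where \<delta>2: "\<delta>2 > 0" "\<And>q. q \<in> \<Omega> \<Longrightarrow> dist q p < \<delta>2 \<Longrightarrow> dist (partial1 ?Q q) (partial1 ?Q p) < 1"
    using cont(1) p unfolding continuous_on_iff by (meson zero_less_one)
  define \<delta> where "\<delta> = min r0 (min \<delta>1 \<delta>2)"
  have \<delta>: "\<delta> > 0" "ball p \<delta> \<subseteq> \<Omega>" using r0 \<delta>1 \<delta>2 by (auto simp: \<delta>_def)
  have "negligible (?w ` {q\<in>ball p \<delta>. ?P q = 0 \<and> ?Q q = 0})"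
  proof (rule negligible_image_common_zeros[where c = c and K = "\<bar>partial1 ?Q p\<bar> + 1"])
    show "continuous_on (ball p \<delta>) (partial1 ?w)" "continuous_on (ball p \<delta>) (partial2 ?w)"
      using cont(3,4) \<delta>(2) continuous_on_subset by blast+
    show "\<forall>q\<in>ball p \<delta>. ?P q * partial2 ?w q - ?Q q * partial1 ?w q = 0"
      using br \<delta>(2) unfolding poisson_bracket_def by blast
    fix q assume q\<delta>: "q \<in> ball p \<delta>"
    then have "dist q p < \<delta>" by (simp add: dist_commute)
    then have q: "q \<in> \<Omega>" "dist q p < \<delta>1" "dist q p < \<delta>2"
      using q\<delta> \<delta>(2) by (auto simp: \<delta>_def)
    show "(?P has_derivative differential ?P q) (at q)" "(?Q has_derivative differential ?Q q) (at q)"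
      "(?w has_derivative differential ?w q) (at q)"
      using q(1) anP anQ anw real_analytic_on_has_derivative by blast+
    show "partial2 ?P q = partial1 ?Q q" by (rule real_analytic_on_partials_commute[OF an q(1)])
    show "c \<le> \<bar>partial2 ?Q q\<bar>" using \<delta>1(2)[OF q(1,2)] unfolding c_def dist_real_def by linarith
    show "\<bar>partial1 ?Q q\<bar> \<le> \<bar>partial1 ?Q p\<bar> + 1" using \<delta>2(2)[OF q(1,3)] by (simp add: dist_real_def)
  qed (use c in auto)
  then show ?thesis using \<delta> by blast
qed

lemma locally_negligible_laplacian_image:
  assumes \<Omega>: "open \<Omega>" and an: "real_analytic_on \<psi> \<Omega>"
    and br: "\<forall>q\<in>\<Omega>. poisson_bracket \<psi> (laplacian \<psi>) q = 0"
    and p: "p \<in> \<Omega>" and nz: "laplacian \<psi> p \<noteq> 0"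
  shows "\<exists>\<delta>>0. ball p \<delta> \<subseteq> \<Omega> \<and>
           negligible (laplacian \<psi> ` {q\<in>ball p \<delta>. partial1 \<psi> q = 0 \<and> partial2 \<psi> q = 0})"
proof (cases "partial2 (partial2 \<psi>) p = 0")
  case False
  then show ?thesis by (rule locally_negligible_laplacian_image_vertical[OF \<Omega> an br p])
next
  case True
  \<comment> \<open>then \<open>\<partial>\<^sub>1\<^sub>1\<psi> p \<noteq> 0\<close>, and exchanging the coordinates reduces to the previous case\<close>
  let ?\<phi> = "\<psi> \<circ> prod.swap"
  have "\<exists>\<delta>>0. ball (prod.swap p) \<delta> \<subseteq> prod.swap ` \<Omega> \<and>
      negligible (laplacian ?\<phi> ` {q\<in>ball (prod.swap p) \<delta>. partial1 ?\<phi> q = 0 \<and> partial2 ?\<phi> q = 0})"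
  proof (rule locally_negligible_laplacian_image_vertical)
    show "open (prod.swap ` \<Omega>)" by (rule open_swap_image[OF \<Omega>])
    show "real_analytic_on ?\<phi> (prod.swap ` \<Omega>)" by (rule real_analytic_on_comp_swap[OF an])
    show "\<forall>q\<in>prod.swap ` \<Omega>. poisson_bracket ?\<phi> (laplacian ?\<phi>) q = 0"
      using br by (auto simp: laplacian_comp_swap poisson_bracket_comp_swap)
    show "prod.swap p \<in> prod.swap ` \<Omega>" using p by simp
    show "partial2 (partial2 ?\<phi>) (prod.swap p) \<noteq> 0"
      using True nz by (simp add: partial2_comp_swap laplacian_def)
  qed
  then obtain \<delta> where \<delta>: "\<delta> > 0" "ball (prod.swap p) \<delta> \<subseteq> prod.swap ` \<Omega>" and
    neg: "negligible (laplacian ?\<phi> ` {q\<in>ball (prod.swap p) \<delta>. partial1 ?\<phi> q = 0 \<and> partial2 ?\<phi> q = 0})"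
    by blast
  let ?Z = "{q\<in>ball p \<delta>. partial1 \<psi> q = 0 \<and> partial2 \<psi> q = 0}"
  have "{q\<in>ball (prod.swap p) \<delta>. partial1 ?\<phi> q = 0 \<and> partial2 ?\<phi> q = 0} = prod.swap ` ?Z"
  proof (intro set_eqI iffI)
    fix q assume "q \<in> {q\<in>ball (prod.swap p) \<delta>. partial1 ?\<phi> q = 0 \<and> partial2 ?\<phi> q = 0}"
    then have "prod.swap q \<in> ?Z"
      using dist_swap[of p "prod.swap q"] by (simp add: partial1_comp_swap partial2_comp_swap)
    then show "q \<in> prod.swap ` ?Z" by (auto intro: image_eqI[of _ _ "prod.swap q"])
  next
    fix q assume "q \<in> prod.swap ` ?Z"
    then obtain y where "y \<in> ?Z" "q = prod.swap y" by blast
    then show "q \<in> {q\<in>ball (prod.swap p) \<delta>. partial1 ?\<phi> q = 0 \<and> partial2 ?\<phi> q = 0}"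
      using dist_swap[of p y] by (simp add: partial1_comp_swap partial2_comp_swap)
  qed
  then have "negligible (laplacian \<psi> ` ?Z)" using neg by (simp add: laplacian_comp_swap image_image)
  moreover have "ball p \<delta> \<subseteq> \<Omega>"
    using \<delta>(2) by (simp add: swap_ball[symmetric] inj_image_subset_iff)
  ultimately show ?thesis using \<delta>(1) by blast
qed

lemma negligible_laplacian_image_of_critical_points:
  assumes "open \<Omega>" and "real_analytic_on \<psi> \<Omega>"
    and "\<forall>q\<in>\<Omega>. poisson_bracket \<psi> (laplacian \<psi>) q = 0"
  shows "negligible (laplacian \<psi> ` {q\<in>\<Omega>. partial1 \<psi> q = 0 \<and> partial2 \<psi> q = 0 \<and> laplacian \<psi> q \<noteq> 0})"
proof (rule negligible_image_if_locally_negligible)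
  fix p assume "p \<in> {q\<in>\<Omega>. partial1 \<psi> q = 0 \<and> partial2 \<psi> q = 0 \<and> laplacian \<psi> q \<noteq> 0}"
  then obtain \<delta> where "\<delta> > 0" "ball p \<delta> \<subseteq> \<Omega>"
    and neg: "negligible (laplacian \<psi> ` {q\<in>ball p \<delta>. partial1 \<psi> q = 0 \<and> partial2 \<psi> q = 0})"
    using locally_negligible_laplacian_image[OF assms] by blast
  then show "\<exists>V. open V \<and> p \<in> V \<and> negligible (laplacian \<psi> `
      ({q\<in>\<Omega>. partial1 \<psi> q = 0 \<and> partial2 \<psi> q = 0 \<and> laplacian \<psi> q \<noteq> 0} \<inter> V))"
    by (intro exI[of _ "ball p \<delta>"]) (auto intro: negligible_subset[OF neg])
qed

lemma constant_if_negligible_nonzero_image: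
  fixes f :: "'a::topological_space \<Rightarrow> real"
  assumes "connected C" "continuous_on C f" "a \<in> C" "x \<in> C"
    and "negligible (f ` {y\<in>C. f y \<noteq> 0})"
  shows "f x = f a"
proof -
  let ?m = "min (f a) (f x)" and ?M = "max (f a) (f x)"
  have "{?m..?M} \<subseteq> f ` C"
    by (rule connected_contains_Icc[OF connected_continuous_image[OF assms(2,1)]])
      (use assms(3,4) in \<open>auto simp: min_def max_def\<close>)
  then have sub: "cbox ?m ?M \<subseteq> insert 0 (f ` {y\<in>C. f y \<noteq> 0})" by auto
  have "negligible (insert 0 (f ` {y\<in>C. f y \<noteq> 0}))" using assms(5) by simp
  from negligible_subset[OF this sub] have "negligible (cbox ?m ?M)" .
  then show ?thesis unfolding negligible_interval by (auto simp: min_def max_def split: if_splits)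
qed

text \<open>The derivative of \<open>(P, Q)\<close> multiplies all lengths by \<open>sqrt (a\<^sup>2 + b\<^sup>2)\<close>.\<close>
lemma isolated_common_zero:
  fixes P Q :: "real \<times> real \<Rightarrow> real"
  assumes dP: "(P has_derivative (\<lambda>h. a * fst h + b * snd h)) (at q)"
    and dQ: "(Q has_derivative (\<lambda>h. b * fst h - a * snd h)) (at q)"
    and z: "P q = 0" "Q q = 0" and nz: "a \<noteq> 0 \<or> b \<noteq> 0"
  obtains e where "e > 0" "\<And>y. dist y q < e \<Longrightarrow> P y = 0 \<Longrightarrow> Q y = 0 \<Longrightarrow> y = q"
proof -
  define k where "k = a\<^sup>2 + b\<^sup>2"
  have k: "k > 0" using nz by (auto simp: k_def add_pos_nonneg add_nonneg_pos)
  define \<epsilon> where "\<epsilon> = sqrt k / 2"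
  have \<epsilon>: "\<epsilon> > 0" using k by (simp add: \<epsilon>_def)
  obtain d1 where d1: "d1 > 0" "\<And>y. norm (y - q) < d1 \<Longrightarrow>
      norm (P y - P q - (a * fst (y - q) + b * snd (y - q))) \<le> \<epsilon> * norm (y - q)"
    using dP \<epsilon> unfolding has_derivative_at_alt by meson
  obtain d2 where d2: "d2 > 0" "\<And>y. norm (y - q) < d2 \<Longrightarrow>
      norm (Q y - Q q - (b * fst (y - q) - a * snd (y - q))) \<le> \<epsilon> * norm (y - q)"
    using dQ \<epsilon> unfolding has_derivative_at_alt by meson
  show thesis
  proof (rule that[of "min d1 d2"])
    show "min d1 d2 > 0" using d1 d2 by simp
    fix y assume y: "dist y q < min d1 d2" "P y = 0" "Q y = 0"
    define h1 where "h1 = fst (y - q)"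
    define h2 where "h2 = snd (y - q)"
    define n where "n = norm (y - q)"
    have n2: "n\<^sup>2 = h1\<^sup>2 + h2\<^sup>2"
    proof -
      have "y - q = (h1, h2)" by (cases y, cases q) (simp add: h1_def h2_def)
      then show ?thesis by (simp add: n_def norm_Pair)
    qed
    have n0: "n \<ge> 0" by (simp add: n_def)
    have "\<bar>a * h1 + b * h2\<bar> \<le> \<epsilon> * n" using d1(2)[of y] y z by (simp add: dist_norm h1_def h2_def n_def)
    then have X: "(a * h1 + b * h2)\<^sup>2 \<le> (\<epsilon> * n)\<^sup>2" using \<epsilon> n0 by (metis abs_ge_zero power2_abs power_mono)
    have "\<bar>b * h1 - a * h2\<bar> \<le> \<epsilon> * n" using d2(2)[of y] y z by (simp add: dist_norm h1_def h2_def n_def)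
    then have Y: "(b * h1 - a * h2)\<^sup>2 \<le> (\<epsilon> * n)\<^sup>2" using \<epsilon> n0 by (metis abs_ge_zero power2_abs power_mono)
    have "(a * h1 + b * h2)\<^sup>2 + (b * h1 - a * h2)\<^sup>2 = k * n\<^sup>2"
      unfolding n2 k_def by (simp add: power2_eq_square algebra_simps)
    moreover have "(\<epsilon> * n)\<^sup>2 = k / 4 * n\<^sup>2" using k by (simp add: \<epsilon>_def power_mult_distrib power_divide)
    ultimately have "k * n\<^sup>2 \<le> k / 2 * n\<^sup>2" using X Y by linarith
    then have "n\<^sup>2 \<le> 0" using k by (simp add: field_simps)
    then have "n = 0" using n0 by (metis le_less_trans less_le not_le zero_less_power2)
    then show "y = q" by (simp add: n_def)
  qed
qed

lemma Dk_nonzero_2_if_laplacian_nonzero: "laplacian \<psi> x \<noteq> 0 \<Longrightarrow> Dk_nonzero \<psi> 2 x"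
  by (auto simp: laplacian_def Dk_nonzero_2_iff)

lemma laplacian_nonzero_at_nonisolated_critical_point:
  assumes an: "real_analytic_on \<psi> \<Omega>" and x: "x \<in> \<Omega>"
    and crit: "partial1 \<psi> x = 0" "partial2 \<psi> x = 0" and D2: "Dk_nonzero \<psi> 2 x"
    and lim: "x islimpt {y. partial1 \<psi> y = 0 \<and> partial2 \<psi> y = 0}"
  shows "laplacian \<psi> x \<noteq> 0"
proof
  assume tr: "laplacian \<psi> x = 0"
  let ?P = "partial1 \<psi>" and ?Q = "partial2 \<psi>"
  have sym: "partial2 ?P x = partial1 ?Q x" by (rule real_analytic_on_partials_commute[OF an x])
  have dP: "(?P has_derivative (\<lambda>h. partial1 ?P x * fst h + partial2 ?P x * snd h)) (at x)"
    using real_analytic_on_has_derivative[OF real_analytic_on_partial1[OF an] x]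
    by (simp add: differential_def)
  have dQ: "(?Q has_derivative (\<lambda>h. partial2 ?P x * fst h - partial1 ?P x * snd h)) (at x)"
    using real_analytic_on_has_derivative[OF real_analytic_on_partial2[OF an] x] sym tr
    by (simp add: differential_def laplacian_def eq_neg_iff_add_eq_0[symmetric])
  have "partial1 ?P x \<noteq> 0 \<or> partial2 ?P x \<noteq> 0"
    using D2 sym tr by (auto simp: Dk_nonzero_2_iff laplacian_def)
  then obtain e where "e > 0" "\<And>y. dist y x < e \<Longrightarrow> ?P y = 0 \<Longrightarrow> ?Q y = 0 \<Longrightarrow> y = x"
    using isolated_common_zero[OF dP dQ crit] by blast
  then show False using lim unfolding islimpt_approachable by fastforce
qed

lemma laplacian_constant_on_critical_component:
  assumes "open \<Omega>" "real_analytic_on \<psi> \<Omega>" "\<forall>q\<in>\<Omega>. poisson_bracket \<psi> (laplacian \<psi>) q = 0"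
    and z: "z \<in> {y\<in>\<Omega>. partial1 \<psi> y = 0 \<and> partial2 \<psi> y = 0}"
    and x: "x \<in> connected_component_set {y\<in>\<Omega>. partial1 \<psi> y = 0 \<and> partial2 \<psi> y = 0} z"
  shows "laplacian \<psi> x = laplacian \<psi> z"
proof -
  let ?Z = "{y\<in>\<Omega>. partial1 \<psi> y = 0 \<and> partial2 \<psi> y = 0}"
  let ?C = "connected_component_set ?Z z"
  have CZ: "?C \<subseteq> ?Z" by (rule connected_component_subset)
  have "negligible (laplacian \<psi> ` {y\<in>?C. laplacian \<psi> y \<noteq> 0})"
    by (rule negligible_subset[OF negligible_laplacian_image_of_critical_points[OF assms(1-3)]])
      (use CZ in auto)
  moreover have "continuous_on ?C (laplacian \<psi>)"
    using real_analytic_on_imp_continuous_on[OF real_analytic_on_laplacian[OF assms(2)]]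
    by (rule continuous_on_subset) (use CZ in auto)
  moreover have "z \<in> ?C" using z by (simp add: connected_component_refl)
  ultimately show ?thesis
    by (intro constant_if_negligible_nonzero_image[OF connected_connected_component _ _ x])
qed

lemma arc_image_islimpt:
  fixes \<gamma> :: "real \<Rightarrow> 'a::metric_space"
  assumes "arc \<gamma>" "x \<in> path_image \<gamma>"
  shows "x islimpt path_image \<gamma>"
proof (rule connected_imp_perfect[OF _ assms(2)])
  show "connected (path_image \<gamma>)" using assms(1) by (simp add: arc_imp_path connected_path_image)
  show "path_image \<gamma> \<noteq> {y}" for y
    using arc_distinct_ends[OF assms(1)] pathstart_in_path_image[of \<gamma>] pathfinish_in_path_image[of \<gamma>]
    by auto
qed

theorem mainTheorem7:
  fixes \<Omega> :: "(real \<times> real) set" and \<psi> :: "real \<times> real \<Rightarrow> real"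
    and \<gamma> :: "real \<Rightarrow> real \<times> real" and xs :: "real \<times> real"
  assumes "open \<Omega>" and "connected \<Omega>"
    and "real_analytic_on \<psi> \<Omega>"
    and "\<not> (\<exists>c. \<forall>x\<in>\<Omega>. \<psi> x = c)"
    and "\<forall>x\<in>\<Omega>. poisson_bracket \<psi> (laplacian \<psi>) x = 0"
    and "arc \<gamma>" and "path_image \<gamma> \<subseteq> critical_set \<psi> \<Omega>"
    and "xs \<in> path_image \<gamma>" and "vanishing_order \<psi> xs = 2"
  shows "\<forall>x\<in>connected_component_set {y\<in>\<Omega>. partial1 \<psi> y = 0 \<and> partial2 \<psi> y = 0} xs.
           vanishing_order \<psi> x = 2"
proof
  let ?Z = "{y\<in>\<Omega>. partial1 \<psi> y = 0 \<and> partial2 \<psi> y = 0}"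
  fix x assume x: "x \<in> connected_component_set ?Z xs"
  have "path_image \<gamma> \<subseteq> ?Z"
    using assms(7) vanishing_order_gt_1_imp_gradient_zero by (auto simp: critical_set_def)
  then have xs: "xs \<in> ?Z" and "xs islimpt ?Z"
    using assms(8) islimpt_subset[OF arc_image_islimpt[OF assms(6,8)]] by auto
  then have lim: "xs islimpt {y. partial1 \<psi> y = 0 \<and> partial2 \<psi> y = 0}"
    by (auto elim: islimpt_subset)
  have "Dk_nonzero \<psi> (vanishing_order \<psi> xs) xs"
    using real_analytic_nonconstant_imp_Dk_nonzero[OF assms(1-4)] xs by (intro Dk_nonzero_vanishing_order) simp
  then have "laplacian \<psi> xs \<noteq> 0"
    using laplacian_nonzero_at_nonisolated_critical_point[OF assms(3) _ _ _ _ lim] xs assms(9) by simp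
  moreover have "laplacian \<psi> x = laplacian \<psi> xs"
    by (rule laplacian_constant_on_critical_component[OF assms(1,3,5) xs x])
  moreover have "x \<in> ?Z" using x connected_component_subset by blast
  ultimately show "vanishing_order \<psi> x = 2"
    by (simp add: Dk_nonzero_2_if_laplacian_nonzero vanishing_order_eq_2I)
qed

end
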